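(* Let $M^2:l=l(u,v)$, $(u,v)$ in a neighbourhood of the origin in $\mathbb R^2$, be a generalized torus of second type in $S^3$ with non-constant Gauss curvature, parameterized so that: $\langle l_u,l_u\rangle=\langle l_v,l_v\rangle=E(u)$ depends only on $u$, $\langle l_u,l_v\rangle=0$, $\langle l,l\rangle=1$; for the unit normal $n$ of $M^2$ in $S^3$ (unit vector orthogonal to $l,l_u,l_v$) one has $\langle l_{uu},n\rangle=1$, $\langle l_{uv},n\rangle=0$, $\langle l_{vv},n\rangle=-1$; and $l(0,0)=e_1$, $l_u(0,0)=\sqrt{E(0)}\,e_2$, $l_v(0,0)=\sqrt{E(0)}\,e_3$, $n(0,0)=e_4$, where $e_1,e_2,e_3,e_4$ is the standard orthonormal basis of $\mathbb R^4$. Put $z(u)=\ln E(u)$, $s=z(0)$, $t=z'(0)/2$, and $\beta=\sqrt{t^2+2\cosh s}$. Then $z$ is the solution of $$z''+4\sinh z=0,\qquad z(0)=s,\quad z'(0)=2t,$$ and it is given explicitly by $z(u)=\ln\dfrac{\alpha^2\cos^2 h^{-1}(u+u_0)+\sin^2h^{-1}(u+u_0)}{\alpha}$ for suitable constants $\alpha>0$ and $u_0$, where $h(x)=\sqrt{\alpha}\int_0^x\frac{d\tau}{\sqrt{\alpha^2\cos^2\tau+\sin^2\tau}}$ and $h^{-1}$ is its inverse; moreover $$l(u,v)=e^{\frac{z(u)}{2}}p(u)+\frac{e^{\frac{z(u)}{2}}}{\beta^2}\Big[\cos\beta v\,\big(e^{\frac s2}e_1+t\,e_2+e^{-\frac s2}e_4\big)+\beta\sin\beta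 v\,e_3\Big],$$ where $p(u)$ is the $\mathbb R^4$-valued solution of the linear system $$p''(u)+z'(u)p'(u)+\beta^2p(u)=0,$$ $$p(0)=\frac{1}{\beta^2}\Big[e^{-\frac s2}(t^2+e^{-s})e_1-t\,e_2-e^{-\frac s2}e_4\Big],\qquad p'(0)=-t\,e^{-\frac s2}e_1+e_2.$$
   Context: $\mathbb R^4$ carries the standard Euclidean inner product and $S^3$ is its unit sphere. A surface in $S^3$ is minimal if its mean curvature in $S^3$ (with respect to a unit normal orthogonal to the position vector and tangent plane) vanishes. Principal lines are the lines of curvature of the surface in $S^3$. A circle is a curve in $\mathbb R^4$ with constant first Frenet curvature and vanishing higher Frenet curvatures. A generalized torus of second type is a minimal surface in $S^3$ on which one of the families of principal lines is a family of circles. (In the parameterization of the claim the $v$-lines are the circles.) *)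

theory Defs
  imports "HOL-Analysis.Analysis"
begin

text \<open>Standard orthonormal basis e1,e2,e3,e4 of R^4 (index type 4 = {0,1,2,3}, and 4 = 0).\<close>
definition e1 :: "real^4" where "e1 = axis 1 1"
definition e2 :: "real^4" where "e2 = axis 2 1"
definition e3 :: "real^4" where "e3 = axis 3 1"
definition e4 :: "real^4" where "e4 = axis 4 1"

definition pu :: "(real \<Rightarrow> real \<Rightarrow> 'a::real_normed_vector) \<Rightarrow> real \<Rightarrow> real \<Rightarrow> 'a" where
  "pu f u v = vector_derivative (\<lambda>x. f x v) (at u)"
definition pv :: "(real \<Rightarrow> real \<Rightarrow> 'a::real_normed_vector) \<Rightarrow> real \<Rightarrow> real \<Rightarrow> 'a" where
  "pv f u v = vector_derivative (\<lambda>y. f u y) (at v)"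

text \<open>C-infinity on an open set U: f lies in a family of continuous maps that is closed
  under taking both partial derivatives (so all iterated partials exist and are continuous).\<close>
definition smooth2 :: "(real \<times> real) set \<Rightarrow> (real \<Rightarrow> real \<Rightarrow> 'a::real_normed_vector) \<Rightarrow> bool" where
  "smooth2 U f \<longleftrightarrow> (\<exists>S. f \<in> S \<and> (\<forall>g\<in>S. continuous_on U (case_prod g) \<and>
      (\<exists>gu\<in>S. \<forall>(u,v)\<in>U. ((\<lambda>x. g x v) has_vector_derivative gu u v) (at u)) \<and>
      (\<exists>gv\<in>S. \<forall>(u,v)\<in>U. ((\<lambda>y. g u y) has_vector_derivative gv u v) (at v))))"

text \<open>Mean curvature in S^3 (w.r.t. unit normal n) and Gauss curvature (via the Gauss equation
  for a surface in the unit sphere: K = 1 + det II / det I).\<close>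
definition mean_curvature :: "(real \<Rightarrow> real \<Rightarrow> real^4) \<Rightarrow> (real \<Rightarrow> real \<Rightarrow> real^4) \<Rightarrow> real \<Rightarrow> real \<Rightarrow> real" where
  "mean_curvature l n u v =
    (let EE = pu l u v \<bullet> pu l u v; FF = pu l u v \<bullet> pv l u v; GG = pv l u v \<bullet> pv l u v;
         LL = pu (pu l) u v \<bullet> n u v; MM = pv (pu l) u v \<bullet> n u v; NN = pv (pv l) u v \<bullet> n u v
     in (EE * NN + GG * LL - 2 * FF * MM) / (2 * (EE * GG - FF\<^sup>2)))"

definition gauss_curvature :: "(real \<Rightarrow> real \<Rightarrow> real^4) \<Rightarrow> (real \<Rightarrow> real \<Rightarrow> real^4) \<Rightarrow> real \<Rightarrow> real \<Rightarrow> real" where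
  "gauss_curvature l n u v =
    (let EE = pu l u v \<bullet> pu l u v; FF = pu l u v \<bullet> pv l u v; GG = pv l u v \<bullet> pv l u v;
         LL = pu (pu l) u v \<bullet> n u v; MM = pv (pu l) u v \<bullet> n u v; NN = pv (pv l) u v \<bullet> n u v
     in 1 + (LL * NN - MM\<^sup>2) / (EE * GG - FF\<^sup>2))"

definition frenet_k1 :: "real^4 \<Rightarrow> real^4 \<Rightarrow> real" where
  "frenet_k1 c1 c2 = sqrt ((norm c1)\<^sup>2 * (norm c2)\<^sup>2 - (c1 \<bullet> c2)\<^sup>2) / (norm c1) ^ 3"

text \<open>A circle: regular curve with constant first Frenet curvature and vanishing higher
  Frenet curvatures (the Frenet frame stops after the normal: c''' lies in span{c',c''}).\<close>
definition is_circle :: "(real \<Rightarrow> real^4) \<Rightarrow> real set \<Rightarrow> bool" where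
  "is_circle c I \<longleftrightarrow> (\<exists>c1 c2 c3 k. \<forall>v\<in>I.
      (c has_vector_derivative c1 v) (at v) \<and> (c1 has_vector_derivative c2 v) (at v) \<and>
      (c2 has_vector_derivative c3 v) (at v) \<and> c1 v \<noteq> 0 \<and>
      frenet_k1 (c1 v) (c2 v) = k \<and> c3 v \<in> span {c1 v, c2 v})"

definition hfun :: "real \<Rightarrow> real \<Rightarrow> real" where
  "hfun \<alpha> x = sqrt \<alpha> *
     (let g = (\<lambda>\<tau>. 1 / sqrt (\<alpha>\<^sup>2 * (cos \<tau>)\<^sup>2 + (sin \<tau>)\<^sup>2))
      in if 0 \<le> x then integral {0..x} g else - integral {x..0} g)"

end

theory Submission
  imports Defs
begin

text \<open>
  With \<open>c = E' / (2 E)\<close>, the coordinate conditions turn the Gauss--Weingarten equations into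
  \<open>l\<^sub>u\<^sub>v = c l\<^sub>v\<close>, \<open>l\<^sub>u\<^sub>u = -E l + c l\<^sub>u + n\<close>, \<open>l\<^sub>v\<^sub>v = -E l - c l\<^sub>u - n\<close>, \<open>n\<^sub>u = -l\<^sub>u / E\<close>,
  \<open>n\<^sub>v = l\<^sub>v / E\<close>. Comparing the two expressions for \<open>l\<^sub>u\<^sub>u\<^sub>v\<close> gives the Gauss equation
  \<open>c' = 1/E - E\<close>, i.e. \<open>z'' + 4 sinh z = 0\<close>, with first integral \<open>c\<^sup>2 + E + 1/E = \<beta>\<^sup>2\<close>.
  Hence \<open>l\<^sub>v\<^sub>v\<^sub>v = -\<beta>\<^sup>2 l\<^sub>v\<close>, and the \<open>v\<close>-line through the origin is the circle fixed by the initial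
  frame. Since \<open>l\<^sub>u - c l\<close> does not depend on \<open>v\<close>, \<open>E\<^sup>-\<^sup>1\<^sup>/\<^sup>2 (l(u,v) - l(u,0))\<close> does not
  depend on \<open>u\<close>, which separates the variables; and \<open>E\<^sup>-\<^sup>1\<^sup>/\<^sup>2 (n + c l\<^sub>u + E l)\<close> is constant,
  which is the linear equation for \<open>p(u) = E\<^sup>-\<^sup>1\<^sup>/\<^sup>2 l(u,0) - A / \<beta>\<^sup>2\<close> with
  \<open>A = e\<^sup>s\<^sup>/\<^sup>2 e\<^sub>1 + t e\<^sub>2 + e\<^sup>-\<^sup>s\<^sup>/\<^sup>2 e\<^sub>4\<close>.

  For the explicit solution, the energy \<open>z'\<^sup>2/4 + 2 cosh z = K\<close> fixes \<open>\<alpha>\<close>; an angle \<open>w\<close> with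
  \<open>w' = e\<^sup>z\<^sup>/\<^sup>2\<close> then satisfies \<open>\<alpha> e\<^sup>z = \<alpha>\<^sup>2 cos\<^sup>2 w + sin\<^sup>2 w\<close>, and \<open>h(w(u)) - u\<close> is constant.
\<close>

section \<open>Real calculus\<close>

lemma has_real_derivative_inner:
  fixes f g :: "real \<Rightarrow> 'a::real_inner"
  assumes "(f has_vector_derivative f') (at x)" "(g has_vector_derivative g') (at x)"
  shows "((\<lambda>x. f x \<bullet> g x) has_real_derivative (f' \<bullet> g x + f x \<bullet> g')) (at x)"
proof -
  have "((\<lambda>x. f x \<bullet> g x) has_derivative (\<lambda>h. f x \<bullet> (h *\<^sub>R g') + (h *\<^sub>R f') \<bullet> g x)) (at x)"
    using assms by (intro has_derivative_inner) (auto simp: has_vector_derivative_def)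
  then show ?thesis unfolding has_field_derivative_def
    by (rule has_derivative_eq_rhs) (auto simp: algebra_simps)
qed

lemma has_vector_derivative_unique_on_open:
  fixes \<phi> \<psi> :: "real \<Rightarrow> 'a::real_normed_vector"
  assumes "(\<phi> has_vector_derivative D) (at x)" "(\<psi> has_vector_derivative D') (at x)"
    and "open S" "x \<in> S" "\<And>y. y \<in> S \<Longrightarrow> \<phi> y = \<psi> y"
  shows "D = D'"
proof -
  have "(\<psi> has_vector_derivative D) (at x)"
    using has_vector_derivative_transform_within_open[OF assms(1)] assms(3-5) by metis
  then show ?thesis using assms(2) vector_derivative_unique_at by blast
qed

lemma has_real_derivative_unique_on_open:
  fixes \<phi> \<psi> :: "real \<Rightarrow> real"
  assumes "(\<phi> has_real_derivative D) (at x)" "(\<psi> has_real_derivative D') (at x)"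
    and "open S" "x \<in> S" "\<And>y. y \<in> S \<Longrightarrow> \<phi> y = \<psi> y"
  shows "D = D'"
  using has_vector_derivative_unique_on_open[of \<phi> D x \<psi> D' S] assms
  by (simp add: has_real_derivative_iff_has_vector_derivative)

lemma inner_derivative_eq_0_if_constant:
  fixes f g :: "real \<Rightarrow> 'a::real_inner"
  assumes "(f has_vector_derivative F) (at x)" "(g has_vector_derivative G) (at x)"
    and "open S" "x \<in> S" "\<And>y. y \<in> S \<Longrightarrow> f y \<bullet> g y = k"
  shows "F \<bullet> g x + f x \<bullet> G = 0"
  using has_real_derivative_unique_on_open[OF has_real_derivative_inner[OF assms(1,2)]
      DERIV_const assms(3,4)] assms(5) by blast

lemma mixed_partials_mean_value:
  fixes F Fu Fv Fuv Fvu :: "real \<Rightarrow> real \<Rightarrow> real"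
  assumes h: "h > 0" and square: "{u..u+h} \<times> {v..v+h} \<subseteq> U"
    and Fu: "\<And>x y. (x, y) \<in> U \<Longrightarrow> ((\<lambda>x. F x y) has_real_derivative Fu x y) (at x)"
    and Fv: "\<And>x y. (x, y) \<in> U \<Longrightarrow> ((\<lambda>y. F x y) has_real_derivative Fv x y) (at y)"
    and Fuv: "\<And>x y. (x, y) \<in> U \<Longrightarrow> ((\<lambda>y. Fu x y) has_real_derivative Fuv x y) (at y)"
    and Fvu: "\<And>x y. (x, y) \<in> U \<Longrightarrow> ((\<lambda>x. Fv x y) has_real_derivative Fvu x y) (at x)"
  obtains \<xi> \<eta> \<xi>' \<eta>' where "\<xi> \<in> {u<..<u+h}" "\<eta> \<in> {v<..<v+h}" "\<xi>' \<in> {u<..<u+h}" "\<eta>' \<in> {v<..<v+h}"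
    and "Fuv \<xi> \<eta> = Fvu \<xi>' \<eta>'"
proof -
  have inU: "(x, y) \<in> U" if "u \<le> x" "x \<le> u+h" "v \<le> y" "y \<le> v+h" for x y
    using that square by auto
  have mvt: "\<exists>z. c < z \<and> z < c+h \<and> g (c+h) - g c = h * g' z"
    if "\<And>x. c \<le> x \<Longrightarrow> x \<le> c+h \<Longrightarrow> (g has_real_derivative g' x) (at x)" for g g' c
    using MVT2[of c "c+h" g g'] h that by auto
  have du: "((\<lambda>x. F x (v+h) - F x v) has_real_derivative Fu x (v+h) - Fu x v) (at x)"
    if "u \<le> x" "x \<le> u+h" for x
    using that h by (auto intro!: DERIV_diff Fu inU)
  obtain \<xi> where \<xi>: "u < \<xi>" "\<xi> < u+h"
    "F (u+h) (v+h) - F (u+h) v - (F u (v+h) - F u v) = h * (Fu \<xi> (v+h) - Fu \<xi> v)"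
    using mvt[of u "\<lambda>x. F x (v+h) - F x v", OF du] by blast
  have "(Fu \<xi> has_real_derivative Fuv \<xi> y) (at y)" if "v \<le> y" "y \<le> v+h" for y
    using that \<xi> by (auto intro!: Fuv inU)
  then obtain \<eta> where \<eta>: "v < \<eta>" "\<eta> < v+h" "Fu \<xi> (v+h) - Fu \<xi> v = h * Fuv \<xi> \<eta>"
    using mvt by blast
  have dv: "((\<lambda>y. F (u+h) y - F u y) has_real_derivative Fv (u+h) y - Fv u y) (at y)"
    if "v \<le> y" "y \<le> v+h" for y
    using that h by (auto intro!: DERIV_diff Fv inU)
  obtain \<eta>' where \<eta>': "v < \<eta>'" "\<eta>' < v+h"
    "F (u+h) (v+h) - F u (v+h) - (F (u+h) v - F u v) = h * (Fv (u+h) \<eta>' - Fv u \<eta>')"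
    using mvt[of v "\<lambda>y. F (u+h) y - F u y", OF dv] by blast
  have "((\<lambda>x. Fv x \<eta>') has_real_derivative Fvu x \<eta>') (at x)" if "u \<le> x" "x \<le> u+h" for x
    using that \<eta>' by (auto intro!: Fvu inU)
  then obtain \<xi>' where \<xi>': "u < \<xi>'" "\<xi>' < u+h" "Fv (u+h) \<eta>' - Fv u \<eta>' = h * Fvu \<xi>' \<eta>'"
    using mvt[of u "\<lambda>x. Fv x \<eta>'" "\<lambda>x. Fvu x \<eta>'"] by blast
  have "h * (h * Fuv \<xi> \<eta>) = h * (h * Fvu \<xi>' \<eta>')"
    using \<xi>(3) \<eta>(3) \<eta>'(3) \<xi>'(3) by (simp add: algebra_simps)
  then have "Fuv \<xi> \<eta> = Fvu \<xi>' \<eta>'" using h by simp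
  then show ?thesis using that \<xi> \<eta> \<xi>' \<eta>' by simp
qed

lemma continuous_on_small_square:
  fixes F :: "real \<times> real \<Rightarrow> real"
  assumes U: "open U" "(u, v) \<in> U" and cont: "continuous_on U F" and e: "e > 0"
  obtains h where "h > 0" "{u..u+h} \<times> {v..v+h} \<subseteq> U"
    and "\<And>p. p \<in> {u..u+h} \<times> {v..v+h} \<Longrightarrow> \<bar>F p - F (u, v)\<bar> < e"
proof -
  obtain r where r: "r > 0" "ball (u, v) r \<subseteq> U" using U open_contains_ball by blast
  obtain d where d: "d > 0" "\<forall>p\<in>U. dist p (u, v) < d \<longrightarrow> dist (F p) (F (u, v)) < e"
    using cont U(2) e unfolding continuous_on_iff by blast
  define h where "h = min r d / 4"
  have h: "h > 0" "2 * h < r" "2 * h < d" using r d by (auto simp: h_def)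
  have near: "dist p (u, v) \<le> 2 * h" if p_in: "p \<in> {u..u+h} \<times> {v..v+h}" for p
  proof -
    obtain x y where p: "p = (x, y)" "x \<in> {u..u+h}" "y \<in> {v..v+h}" using p_in by blast
    have "dist (x, y) (u, v) \<le> \<bar>dist x u\<bar> + \<bar>dist y v\<bar>"
      unfolding dist_Pair_Pair by (rule sqrt_sum_squares_le_sum_abs)
    also have "\<dots> \<le> 2 * h" using p by (auto simp: dist_real_def)
    finally show ?thesis using p(1) by simp
  qed
  have square: "{u..u+h} \<times> {v..v+h} \<subseteq> U"
  proof
    fix p assume "p \<in> {u..u+h} \<times> {v..v+h}"
    then have "dist p (u, v) < r" using near h(2) by fastforce
    then show "p \<in> U" using r(2) by (auto simp: dist_commute)
  qed
  have "\<bar>F p - F (u, v)\<bar> < e" if "p \<in> {u..u+h} \<times> {v..v+h}" for p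
    using d(2) subsetD[OF square that] near[OF that] h(3) by (force simp: dist_real_def)
  then show ?thesis using that h(1) square by blast
qed

lemma mixed_partials_commute:
  fixes F Fu Fv Fuv Fvu :: "real \<Rightarrow> real \<Rightarrow> real"
  assumes U: "open U" "(u, v) \<in> U"
    and Fu: "\<And>x y. (x, y) \<in> U \<Longrightarrow> ((\<lambda>x. F x y) has_real_derivative Fu x y) (at x)"
    and Fv: "\<And>x y. (x, y) \<in> U \<Longrightarrow> ((\<lambda>y. F x y) has_real_derivative Fv x y) (at y)"
    and Fuv: "\<And>x y. (x, y) \<in> U \<Longrightarrow> ((\<lambda>y. Fu x y) has_real_derivative Fuv x y) (at y)"
    and Fvu: "\<And>x y. (x, y) \<in> U \<Longrightarrow> ((\<lambda>x. Fv x y) has_real_derivative Fvu x y) (at x)"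
    and cont: "continuous_on U (case_prod Fuv)" "continuous_on U (case_prod Fvu)"
  shows "Fuv u v = Fvu u v"
proof -
  have approx: "\<bar>Fuv u v - Fvu u v\<bar> \<le> 2 * e" if e: "e > 0" for e
  proof -
    obtain h1 where h1: "h1 > 0" "{u..u+h1} \<times> {v..v+h1} \<subseteq> U"
      "\<And>x y. (x, y) \<in> {u..u+h1} \<times> {v..v+h1} \<Longrightarrow> \<bar>Fuv x y - Fuv u v\<bar> < e"
      using continuous_on_small_square[OF U cont(1) e] by (metis case_prod_conv)
    obtain h2 where h2: "h2 > 0" "{u..u+h2} \<times> {v..v+h2} \<subseteq> U"
      "\<And>x y. (x, y) \<in> {u..u+h2} \<times> {v..v+h2} \<Longrightarrow> \<bar>Fvu x y - Fvu u v\<bar> < e"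
      using continuous_on_small_square[OF U cont(2) e] by (metis case_prod_conv)
    define h where "h = min h1 h2"
    have h: "h > 0" "h \<le> h1" "h \<le> h2" using h1(1) h2(1) by (auto simp: h_def)
    have square: "{u..u+h} \<times> {v..v+h} \<subseteq> U"
      by (rule order.trans[OF _ h1(2)]) (use h in auto)
    obtain \<xi> \<eta> \<xi>' \<eta>' where pts: "\<xi> \<in> {u<..<u+h}" "\<eta> \<in> {v<..<v+h}" "\<xi>' \<in> {u<..<u+h}" "\<eta>' \<in> {v<..<v+h}"
      and eq: "Fuv \<xi> \<eta> = Fvu \<xi>' \<eta>'"
      using mixed_partials_mean_value[OF h(1) square Fu Fv Fuv Fvu] by blast
    have "(\<xi>, \<eta>) \<in> {u..u+h1} \<times> {v..v+h1}" "(\<xi>', \<eta>') \<in> {u..u+h2} \<times> {v..v+h2}"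
      using pts h by auto
    then have "\<bar>Fuv \<xi> \<eta> - Fuv u v\<bar> < e" "\<bar>Fvu \<xi>' \<eta>' - Fvu u v\<bar> < e"
      using h1(3) h2(3) by blast+
    then show ?thesis using eq by linarith
  qed
  have "\<bar>Fuv u v - Fvu u v\<bar> \<le> 0 + e" if "e > 0" for e
    using approx[of "e / 2"] that by simp
  then have "\<bar>Fuv u v - Fvu u v\<bar> \<le> 0" by (rule field_le_epsilon)
  then show ?thesis by simp
qed

lemma exp_half_ln: "x > 0 \<Longrightarrow> exp (ln x / 2) = sqrt x"
  using powr_half_sqrt[of x] by (simp add: powr_def)

lemma has_vector_derivative_scaleR_const[derivative_intros]:
  "(f has_vector_derivative f') F \<Longrightarrow> ((\<lambda>x. k *\<^sub>R f x) has_vector_derivative k *\<^sub>R f') F"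
  by (rule bounded_linear.has_vector_derivative[OF bounded_linear_scaleR_right])

lemma orthogonal_frame_expansion:
  fixes X P Q R N :: "'a::euclidean_space"
  assumes dim: "DIM('a) = 4"
    and norms: "P \<bullet> P = 1" "Q \<bullet> Q = e" "R \<bullet> R = e" "N \<bullet> N = 1" "e > 0"
    and orth: "P \<bullet> Q = 0" "P \<bullet> R = 0" "P \<bullet> N = 0" "Q \<bullet> R = 0" "Q \<bullet> N = 0" "R \<bullet> N = 0"
  shows "X = (X \<bullet> P) *\<^sub>R P + ((X \<bullet> Q) / e) *\<^sub>R Q + ((X \<bullet> R) / e) *\<^sub>R R + (X \<bullet> N) *\<^sub>R N"
proof -
  define B where "B = {P, Q, R, N}"
  have nonzero: "P \<noteq> 0" "Q \<noteq> 0" "R \<noteq> 0" "N \<noteq> 0" using norms by auto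
  have distinct: "P \<noteq> Q" "P \<noteq> R" "P \<noteq> N" "Q \<noteq> R" "Q \<noteq> N" "R \<noteq> N"
    using norms orth by (metis inner_commute zero_neq_one less_irrefl)+
  have orth': "Q \<bullet> P = 0" "R \<bullet> P = 0" "N \<bullet> P = 0" "R \<bullet> Q = 0" "N \<bullet> Q = 0" "N \<bullet> R = 0"
    using orth by (simp_all add: inner_commute)
  have "pairwise orthogonal B" unfolding B_def pairwise_def orthogonal_def
    using orth orth' by auto
  then have "independent B" using pairwise_orthogonal_independent nonzero unfolding B_def by auto
  moreover have "card B = 4" unfolding B_def using distinct by auto
  ultimately have spans: "UNIV \<subseteq> span B"
    using card_ge_dim_independent[of B UNIV] dim by simp
  define Y where "Y = X - ((X \<bullet> P) *\<^sub>R P + ((X \<bullet> Q) / e) *\<^sub>R Q + ((X \<bullet> R) / e) *\<^sub>R R + (X \<bullet> N) *\<^sub>R N)"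
  have "Y \<bullet> P = 0" "Y \<bullet> Q = 0" "Y \<bullet> R = 0" "Y \<bullet> N = 0"
    unfolding Y_def using norms orth orth' by (simp_all add: inner_diff_left inner_add_left)
  then have "orthogonal Y y" if "y \<in> B" for y
    using that unfolding B_def orthogonal_def by auto
  then have "orthogonal Y Y" using spans orthogonal_to_span by blast
  then show ?thesis unfolding Y_def orthogonal_def by simp
qed

lemma third_order_ode_zero_initial:
  fixes f f' f'' :: "real \<Rightarrow> 'a::real_inner"
  assumes k: "k > 0" and I: "0 \<in> {c<..<d}"
    and derivs: "\<And>y. y \<in> {c<..<d} \<Longrightarrow> (f has_vector_derivative f' y) (at y)"
      "\<And>y. y \<in> {c<..<d} \<Longrightarrow> (f' has_vector_derivative f'' y) (at y)"
      "\<And>y. y \<in> {c<..<d} \<Longrightarrow> (f'' has_vector_derivative (- k) *\<^sub>R f' y) (at y)"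
    and initial: "f 0 = 0" "f' 0 = 0" "f'' 0 = 0"
    and y: "y \<in> {c<..<d}"
  shows "f y = 0"
proof -
  \<comment> \<open>the energy k |f'|^2 + |f''|^2 is conserved\<close>
  define \<Phi> where "\<Phi> y = k * (f' y \<bullet> f' y) + f'' y \<bullet> f'' y" for y
  have "(\<Phi> has_real_derivative 0) (at y within {c<..<d})" if y: "y \<in> {c<..<d}" for y
  proof -
    have "(\<Phi> has_real_derivative k * (f'' y \<bullet> f' y + f' y \<bullet> f'' y)
        + (((- k) *\<^sub>R f' y) \<bullet> f'' y + f'' y \<bullet> ((- k) *\<^sub>R f' y))) (at y)"
      unfolding \<Phi>_def[abs_def] using derivs y
      by (intro DERIV_add DERIV_cmult has_real_derivative_inner) auto
    then show ?thesis by (simp add: inner_commute has_field_derivative_at_within)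
  qed
  then obtain K where K: "\<And>y. y \<in> {c<..<d} \<Longrightarrow> \<Phi> y = K"
    using has_field_derivative_zero_constant[of "{c<..<d}" \<Phi>] by auto
  have f'_zero: "f' y = 0" if y: "y \<in> {c<..<d}" for y
  proof -
    have "k * (f' y \<bullet> f' y) + f'' y \<bullet> f'' y = 0"
      using K[OF y] K[OF I] initial unfolding \<Phi>_def by simp
    then have "f' y \<bullet> f' y = 0" using k
      by (metis add_nonneg_eq_0_iff inner_ge_zero mult_eq_0_iff mult_nonneg_nonneg less_imp_le less_irrefl)
    then show ?thesis by simp
  qed
  have "(f has_vector_derivative 0) (at y within {c<..<d})" if y: "y \<in> {c<..<d}" for y
    using derivs(1)[OF y] f'_zero[OF y] has_vector_derivative_at_within by metis
  then obtain K' where "\<And>y. y \<in> {c<..<d} \<Longrightarrow> f y = K'"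
    using has_vector_derivative_zero_constant[of "{c<..<d}" f] by auto
  then show ?thesis using I y initial by metis
qed

lemma circle_has_vector_derivatives:
  fixes P A B :: "'a::real_normed_vector"
  assumes "\<beta> \<noteq> 0"
  shows "((\<lambda>y. P + ((cos (\<beta> * y) - 1) / \<beta>\<^sup>2) *\<^sub>R A + (sin (\<beta> * y) / \<beta>) *\<^sub>R B) has_vector_derivative
      (- sin (\<beta> * y) / \<beta>) *\<^sub>R A + cos (\<beta> * y) *\<^sub>R B) (at y)"
    and "((\<lambda>y. (- sin (\<beta> * y) / \<beta>) *\<^sub>R A + cos (\<beta> * y) *\<^sub>R B) has_vector_derivative
      (- cos (\<beta> * y)) *\<^sub>R A - (\<beta> * sin (\<beta> * y)) *\<^sub>R B) (at y)"
    and "((\<lambda>y. (- cos (\<beta> * y)) *\<^sub>R A - (\<beta> * sin (\<beta> * y)) *\<^sub>R B) has_vector_derivative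
      (- \<beta>\<^sup>2) *\<^sub>R ((- sin (\<beta> * y) / \<beta>) *\<^sub>R A + cos (\<beta> * y) *\<^sub>R B)) (at y)"
  using assms
  by (auto intro!: derivative_eq_intros simp: power2_eq_square scaleR_add_right scaleR_diff_right mult_ac)

definition oriented_integral :: "(real \<Rightarrow> real) \<Rightarrow> real \<Rightarrow> real" where
  "oriented_integral g x = (if 0 \<le> x then integral {0..x} g else - integral {x..0} g)"

lemma has_real_derivative_oriented_integral:
  assumes g: "continuous_on {c<..<d} g" and I: "0 \<in> {c<..<d}" and x: "x \<in> {c<..<d}"
  shows "(oriented_integral g has_real_derivative g x) (at x)"
proof -
  define e where "e = (c + min x 0) / 2"
  define f where "f = (max x 0 + d) / 2"
  have e: "c < e" "e < min x 0" using I x unfolding e_def by auto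
  have f: "max x 0 < f" "f < d" using I x unfolding f_def by auto
  have gc: "continuous_on {e..f} g" by (rule continuous_on_subset[OF g]) (use e f in auto)
  have int: "g integrable_on {p..q}" if "e \<le> p" "q \<le> f" for p q
    using integrable_on_subinterval[OF integrable_continuous_interval[OF gc]] that by auto
  define G where "G y = integral {e..y} g - integral {e..0} g" for y
  have eq: "G y = oriented_integral g y" if y: "y \<in> {e<..<f}" for y
  proof (cases "0 \<le> y")
    case True
    have "integral {e..0} g + integral {0..y} g = integral {e..y} g"
      by (rule Henstock_Kurzweil_Integration.integral_combine) (use True e y in \<open>auto intro!: int\<close>)
    then show ?thesis unfolding G_def oriented_integral_def using True by simp
  next
    case False
    have "integral {e..y} g + integral {y..0} g = integral {e..0} g"
      by (rule Henstock_Kurzweil_Integration.integral_combine) (use False e y f in \<open>auto intro!: int\<close>)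
    then show ?thesis unfolding G_def oriented_integral_def using False by simp
  qed
  have "x \<in> {e..f}" using e f by auto
  then have "((\<lambda>y. integral {e..y} g) has_real_derivative g x) (at x within {e..f})"
    by (rule integral_has_real_derivative[OF gc])
  moreover have "x \<in> interior {e..f}" using e f by (simp add: interior_atLeastAtMost_real)
  ultimately have "((\<lambda>y. integral {e..y} g) has_real_derivative g x) (at x)"
    using at_within_interior by metis
  then have "(G has_real_derivative g x) (at x)" unfolding G_def[abs_def]
    by (auto intro!: derivative_eq_intros)
  then show ?thesis
    by (rule has_field_derivative_transform_within_open[where S="{e<..<f}"]) (use e f eq in auto)
qed

lemma cos_sin_weighted_pos:
  fixes \<alpha> x :: real
  assumes "\<alpha> > 0"
  shows "\<alpha>\<^sup>2 * (cos x)\<^sup>2 + (sin x)\<^sup>2 > 0"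
proof (cases "cos x = 0")
  case True
  then show ?thesis using sin_cos_squared_add[of x] by simp
next
  case False
  then show ?thesis using assms by (simp add: add_pos_nonneg)
qed

lemma hfun_has_real_derivative:
  assumes "\<alpha> > 0"
  shows "(hfun \<alpha> has_real_derivative sqrt \<alpha> / sqrt (\<alpha>\<^sup>2 * (cos x)\<^sup>2 + (sin x)\<^sup>2)) (at x)"
proof -
  define g where "g \<tau> = 1 / sqrt (\<alpha>\<^sup>2 * (cos \<tau>)\<^sup>2 + (sin \<tau>)\<^sup>2)" for \<tau>
  have "continuous_on UNIV g"
    unfolding g_def using cos_sin_weighted_pos[OF assms]
    by (intro continuous_intros) (simp add: less_le)
  then have "(oriented_integral g has_real_derivative g x) (at x)"
    by (intro has_real_derivative_oriented_integral[of "- (\<bar>x\<bar> + 1)" "\<bar>x\<bar> + 1"])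
       (auto intro: continuous_on_subset)
  then have "((\<lambda>x. sqrt \<alpha> * oriented_integral g x) has_real_derivative sqrt \<alpha> * g x) (at x)"
    by (rule DERIV_cmult)
  moreover have "hfun \<alpha> = (\<lambda>x. sqrt \<alpha> * oriented_integral g x)"
    unfolding hfun_def oriented_integral_def g_def Let_def by auto
  ultimately show ?thesis unfolding g_def by simp
qed

lemma strict_mono_hfun:
  assumes "\<alpha> > 0"
  shows "strict_mono (hfun \<alpha>)"
proof (rule strict_monoI)
  fix x y :: real assume "x < y"
  moreover have "sqrt \<alpha> / sqrt (\<alpha>\<^sup>2 * (cos t)\<^sup>2 + (sin t)\<^sup>2) > 0" for t
    using assms cos_sin_weighted_pos[OF assms, of t] by simp
  ultimately show "hfun \<alpha> x < hfun \<alpha> y"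
    using DERIV_pos_imp_increasing hfun_has_real_derivative[OF assms] by blast
qed

lemma half_angle_exists:
  fixes X Y :: real
  assumes "X\<^sup>2 + Y\<^sup>2 = 1"
  obtains w where "(cos w)\<^sup>2 = (1 + X) / 2" "(sin w)\<^sup>2 = (1 - X) / 2" "sin w * cos w = Y / 2"
proof -
  obtain \<theta> where \<theta>: "X = cos \<theta>" "Y = sin \<theta>" using sincos_total_2pi assms by metis
  have "(cos (\<theta> / 2))\<^sup>2 = (1 + X) / 2" using cos_double_cos[of "\<theta> / 2"] \<theta> by simp
  moreover from this have "(sin (\<theta> / 2))\<^sup>2 = (1 - X) / 2" by (simp add: sin_squared_eq field_simps)
  moreover have "sin (\<theta> / 2) * cos (\<theta> / 2) = Y / 2" using sin_double[of "\<theta> / 2"] \<theta> by simp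
  ultimately show ?thesis using that by blast
qed

section \<open>Smooth maps on a rectangle\<close>

text \<open>Smoothness only asks for agreement with a member of the family on the rectangle, so that
  \<open>pu\<close> and \<open>pv\<close> of a smooth map are smooth again.\<close>

locale smooth_rectangle =
  fixes a b :: real and S :: "(real \<Rightarrow> real \<Rightarrow> 'a::real_inner) set"
  assumes a_pos: "a > 0" and b_pos: "b > 0"
    and family: "\<forall>g\<in>S. continuous_on ({-a<..<a} \<times> {-b<..<b}) (case_prod g) \<and>
      (\<exists>gu\<in>S. \<forall>(u,v)\<in>{-a<..<a} \<times> {-b<..<b}. ((\<lambda>x. g x v) has_vector_derivative gu u v) (at u)) \<and>
      (\<exists>gv\<in>S. \<forall>(u,v)\<in>{-a<..<a} \<times> {-b<..<b}. ((\<lambda>y. g u y) has_vector_derivative gv u v) (at v))"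
begin

abbreviation R :: "(real \<times> real) set" where "R \<equiv> {-a<..<a} \<times> {-b<..<b}"

definition smooth :: "(real \<Rightarrow> real \<Rightarrow> 'a) \<Rightarrow> bool" where
  "smooth f \<longleftrightarrow> (\<exists>g\<in>S. \<forall>(u,v)\<in>R. f u v = g u v)"

lemma smooth_pu_in_family:
  assumes "smooth f"
  shows "\<exists>gu\<in>S. \<forall>(u,v)\<in>R. pu f u v = gu u v \<and> ((\<lambda>x. f x v) has_vector_derivative gu u v) (at u)"
proof -
  obtain g where g: "g \<in> S" "\<And>u v. (u,v) \<in> R \<Longrightarrow> f u v = g u v"
    using assms unfolding smooth_def by blast
  obtain gu where gu: "gu \<in> S" "\<forall>(u,v)\<in>R. ((\<lambda>x. g x v) has_vector_derivative gu u v) (at u)"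
    using family g(1) by blast
  have deriv: "((\<lambda>x. f x v) has_vector_derivative gu u v) (at u)" if "(u,v) \<in> R" for u v
    using has_vector_derivative_transform_within_open[of "\<lambda>x. g x v" "gu u v" u "{-a<..<a}"]
      gu(2) that g(2) by auto
  show ?thesis by (rule bexI[OF _ gu(1)]) (auto simp: pu_def deriv vector_derivative_at)
qed

lemma smooth_pv_in_family:
  assumes "smooth f"
  shows "\<exists>gv\<in>S. \<forall>(u,v)\<in>R. pv f u v = gv u v \<and> ((\<lambda>y. f u y) has_vector_derivative gv u v) (at v)"
proof -
  obtain g where g: "g \<in> S" "\<And>u v. (u,v) \<in> R \<Longrightarrow> f u v = g u v"
    using assms unfolding smooth_def by blast
  obtain gv where gv: "gv \<in> S" "\<forall>(u,v)\<in>R. ((\<lambda>y. g u y) has_vector_derivative gv u v) (at v)"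
    using family g(1) by blast
  have deriv: "((\<lambda>y. f u y) has_vector_derivative gv u v) (at v)" if "(u,v) \<in> R" for u v
    using has_vector_derivative_transform_within_open[of "\<lambda>y. g u y" "gv u v" v "{-b<..<b}"]
      gv(2) that g(2) by auto
  show ?thesis by (rule bexI[OF _ gv(1)]) (auto simp: pv_def deriv vector_derivative_at)
qed

lemma smooth_has_pu: "smooth f \<Longrightarrow> (u,v) \<in> R \<Longrightarrow> ((\<lambda>x. f x v) has_vector_derivative pu f u v) (at u)"
  using smooth_pu_in_family by fastforce

lemma smooth_has_pv: "smooth f \<Longrightarrow> (u,v) \<in> R \<Longrightarrow> ((\<lambda>y. f u y) has_vector_derivative pv f u v) (at v)"
  using smooth_pv_in_family by fastforce

lemma smooth_pu: "smooth f \<Longrightarrow> smooth (pu f)"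
  using smooth_pu_in_family unfolding smooth_def by fastforce

lemma smooth_pv: "smooth f \<Longrightarrow> smooth (pv f)"
  using smooth_pv_in_family unfolding smooth_def by fastforce

lemma smooth_continuous_on: "smooth f \<Longrightarrow> continuous_on R (case_prod f)"
proof -
  assume "smooth f"
  then obtain g where g: "g \<in> S" "\<And>u v. (u,v) \<in> R \<Longrightarrow> f u v = g u v"
    unfolding smooth_def by blast
  have "continuous_on R (case_prod g)" using family g(1) by blast
  then show ?thesis by (rule continuous_on_eq) (use g(2) in auto)
qed

lemma smooth_pv_pu_eq_pu_pv:
  assumes f: "smooth f" and uv: "(u,v) \<in> R"
  shows "pv (pu f) u v = pu (pv f) u v"
proof -
  have "pv (pu f) u v \<bullet> w = pu (pv f) u v \<bullet> w" for w
  proof (rule mixed_partials_commute[where F="\<lambda>x y. f x y \<bullet> w" and U=R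
      and Fu="\<lambda>x y. pu f x y \<bullet> w" and Fv="\<lambda>x y. pv f x y \<bullet> w"
      and Fuv="\<lambda>x y. pv (pu f) x y \<bullet> w" and Fvu="\<lambda>x y. pu (pv f) x y \<bullet> w"])
    have cont: "continuous_on R (\<lambda>p. case_prod g p \<bullet> w)" if "smooth g" for g
      using smooth_continuous_on[OF that] by (intro continuous_intros)
    show "continuous_on R (case_prod (\<lambda>x y. pv (pu f) x y \<bullet> w))"
      using cont[OF smooth_pv[OF smooth_pu[OF f]]] by (simp add: case_prod_beta')
    show "continuous_on R (case_prod (\<lambda>x y. pu (pv f) x y \<bullet> w))"
      using cont[OF smooth_pu[OF smooth_pv[OF f]]] by (simp add: case_prod_beta')
  qed (use uv in \<open>auto intro!: has_real_derivative_inner[where g'=0, simplified]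
      smooth_has_pu smooth_has_pv smooth_pu smooth_pv f open_Times\<close>)
  then show ?thesis using vector_eq_rdot by blast
qed

end

lemma smooth2_imp_smooth_rectangle:
  assumes "smooth2 ({-a<..<a} \<times> {-b<..<b}) f" "a > 0" "b > 0"
  obtains S where "smooth_rectangle a b S" "smooth_rectangle.smooth a b S f"
proof -
  from assms(1) obtain S where "f \<in> S" and rectangle: "smooth_rectangle a b S"
    unfolding smooth2_def smooth_rectangle_def using assms(2,3) by blast
  then have "smooth_rectangle.smooth a b S f"
    by (auto simp: smooth_rectangle.smooth_def[OF rectangle])
  then show ?thesis using that rectangle by blast
qed

section \<open>The Gauss--Weingarten equations\<close>

locale principal_chart = smooth_rectangle a b S
  for a b :: real and S :: "(real \<Rightarrow> real \<Rightarrow> real^4) set" +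
  fixes l n :: "real \<Rightarrow> real \<Rightarrow> real^4" and E :: "real \<Rightarrow> real"
  assumes smooth_l: "smooth l"
    and E_pos: "\<And>u. u \<in> {-a<..<a} \<Longrightarrow> E u > 0"
    and first_ff: "\<And>u v. (u,v) \<in> R \<Longrightarrow> pu l u v \<bullet> pu l u v = E u \<and> pv l u v \<bullet> pv l u v = E u \<and>
          pu l u v \<bullet> pv l u v = 0 \<and> l u v \<bullet> l u v = 1"
    and normal: "\<And>u v. (u,v) \<in> R \<Longrightarrow>
          n u v \<bullet> n u v = 1 \<and> n u v \<bullet> l u v = 0 \<and> n u v \<bullet> pu l u v = 0 \<and> n u v \<bullet> pv l u v = 0"
    and second_ff: "\<And>u v. (u,v) \<in> R \<Longrightarrow>
          pu (pu l) u v \<bullet> n u v = 1 \<and> pv (pu l) u v \<bullet> n u v = 0 \<and> pv (pv l) u v \<bullet> n u v = -1"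
begin

abbreviation "Lu \<equiv> pu l"
abbreviation "Lv \<equiv> pv l"
abbreviation "Luu \<equiv> pu (pu l)"
abbreviation "Luv \<equiv> pv (pu l)"
abbreviation "Lvv \<equiv> pv (pv l)"

lemma smooth_derivatives: "smooth Lu" "smooth Lv" "smooth Luu" "smooth Luv" "smooth Lvv"
  by (simp_all add: smooth_pu smooth_pv smooth_l)

lemma frame_inners:
  assumes "(u,v) \<in> R"
  shows "Lu u v \<bullet> Lu u v = E u" "Lv u v \<bullet> Lv u v = E u" "Lu u v \<bullet> Lv u v = 0" "Lv u v \<bullet> Lu u v = 0"
    "l u v \<bullet> l u v = 1" "n u v \<bullet> n u v = 1"
    "n u v \<bullet> l u v = 0" "n u v \<bullet> Lu u v = 0" "n u v \<bullet> Lv u v = 0"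
    "l u v \<bullet> n u v = 0" "Lu u v \<bullet> n u v = 0" "Lv u v \<bullet> n u v = 0"
    "Luu u v \<bullet> n u v = 1" "Luv u v \<bullet> n u v = 0" "Lvv u v \<bullet> n u v = -1"
  using first_ff[OF assms] normal[OF assms] second_ff[OF assms] by (auto simp: inner_commute)

lemma inner_pu_eq_0_if_constant:
  assumes "smooth f" "smooth g" "(u,v) \<in> R" "\<And>x. x \<in> {-a<..<a} \<Longrightarrow> f x v \<bullet> g x v = k"
  shows "pu f u v \<bullet> g u v + f u v \<bullet> pu g u v = 0"
  using inner_derivative_eq_0_if_constant[OF smooth_has_pu[OF assms(1,3)] smooth_has_pu[OF assms(2,3)],
      of "{-a<..<a}" k] assms(3,4) by auto

lemma inner_pv_eq_0_if_constant:
  assumes "smooth f" "smooth g" "(u,v) \<in> R" "\<And>y. y \<in> {-b<..<b} \<Longrightarrow> f u y \<bullet> g u y = k"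
  shows "pv f u v \<bullet> g u v + f u v \<bullet> pv g u v = 0"
  using inner_derivative_eq_0_if_constant[OF smooth_has_pv[OF assms(1,3)] smooth_has_pv[OF assms(2,3)],
      of "{-b<..<b}" k] assms(3,4) by auto

text \<open>The Christoffel coefficient \<open>c = E' / (2 E)\<close>, read off on the line \<open>v = 0\<close>.\<close>
definition c :: "real \<Rightarrow> real" where "c u = (Luu u 0 \<bullet> Lu u 0) / E u"

lemma E_has_real_derivative:
  assumes u: "u \<in> {-a<..<a}"
  shows "(E has_real_derivative 2 * c u * E u) (at u)"
proof -
  have u0: "(u,0) \<in> R" using u b_pos by auto
  have "((\<lambda>x. Lu x 0 \<bullet> Lu x 0) has_real_derivative 2 * (Luu u 0 \<bullet> Lu u 0)) (at u)"
    using has_real_derivative_inner[OF smooth_has_pu smooth_has_pu, OF smooth_derivatives(1) u0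
        smooth_derivatives(1) u0] by (simp add: inner_commute)
  then have "(E has_real_derivative 2 * (Luu u 0 \<bullet> Lu u 0)) (at u)"
    by (rule has_field_derivative_transform_within_open[where S="{-a<..<a}"])
       (use u b_pos frame_inners(1) in auto)
  then show ?thesis unfolding c_def using E_pos[OF u] by simp
qed

lemma pu_inner_self_eq:
  assumes f: "smooth f" and uv: "(u,v) \<in> R" and inner: "\<And>x. x \<in> {-a<..<a} \<Longrightarrow> f x v \<bullet> f x v = E x"
  shows "pu f u v \<bullet> f u v = c u * E u"
proof -
  have "((\<lambda>x. f x v \<bullet> f x v) has_real_derivative 2 * (pu f u v \<bullet> f u v)) (at u)"
    using has_real_derivative_inner[OF smooth_has_pu[OF f uv] smooth_has_pu[OF f uv]]
    by (simp add: inner_commute)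
  from has_real_derivative_unique_on_open[OF this E_has_real_derivative, of "{-a<..<a}"]
  show ?thesis using uv inner by auto
qed

lemma tangents_orthogonal_position:
  assumes uv: "(u,v) \<in> R"
  shows "Lu u v \<bullet> l u v = 0" "Lv u v \<bullet> l u v = 0"
proof -
  have "Lu u v \<bullet> l u v + l u v \<bullet> Lu u v = 0"
    by (rule inner_pu_eq_0_if_constant[OF smooth_l smooth_l uv, of 1]) (use uv frame_inners in auto)
  then show "Lu u v \<bullet> l u v = 0" by (simp add: inner_commute)
  have "Lv u v \<bullet> l u v + l u v \<bullet> Lv u v = 0"
    by (rule inner_pv_eq_0_if_constant[OF smooth_l smooth_l uv, of 1]) (use uv frame_inners in auto)
  then show "Lv u v \<bullet> l u v = 0" by (simp add: inner_commute)
qed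

lemma second_derivative_inners:
  assumes uv: "(u,v) \<in> R"
  shows "Luu u v \<bullet> l u v = - E u" "Luv u v \<bullet> l u v = 0" "Lvv u v \<bullet> l u v = - E u"
    "Luu u v \<bullet> Lu u v = c u * E u" "Luu u v \<bullet> Lv u v = 0"
    "Luv u v \<bullet> Lu u v = 0" "Luv u v \<bullet> Lv u v = c u * E u"
    "Lvv u v \<bullet> Lu u v = - c u * E u" "Lvv u v \<bullet> Lv u v = 0"
proof -
  have u_line: "(x, v) \<in> R" if "x \<in> {-a<..<a}" for x using uv that by auto
  have v_line: "(u, y) \<in> R" if "y \<in> {-b<..<b}" for y using uv that by auto
  note smooth = smooth_l smooth_derivatives
  note ff = frame_inners tangents_orthogonal_position
  have schwarz: "pu Lv u v = Luv u v" using smooth_pv_pu_eq_pu_pv[OF smooth_l uv] by simp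
  have "Luu u v \<bullet> l u v + Lu u v \<bullet> Lu u v = 0"
    by (rule inner_pu_eq_0_if_constant[OF smooth(2) smooth_l uv, of 0]) (use u_line ff in auto)
  then show "Luu u v \<bullet> l u v = - E u" using ff(1)[OF uv] by simp
  have "Luv u v \<bullet> l u v + Lu u v \<bullet> Lv u v = 0"
    by (rule inner_pv_eq_0_if_constant[OF smooth(2) smooth_l uv, of 0]) (use v_line ff in auto)
  then show "Luv u v \<bullet> l u v = 0" using ff(3)[OF uv] by simp
  have "Lvv u v \<bullet> l u v + Lv u v \<bullet> Lv u v = 0"
    by (rule inner_pv_eq_0_if_constant[OF smooth(3) smooth_l uv, of 0]) (use v_line ff in auto)
  then show "Lvv u v \<bullet> l u v = - E u" using ff(2)[OF uv] by simp
  show "Luu u v \<bullet> Lu u v = c u * E u"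
    using pu_inner_self_eq[OF smooth(2) uv] u_line frame_inners by auto
  have "pu Lv u v \<bullet> Lv u v = c u * E u"
    using pu_inner_self_eq[OF smooth(3) uv] u_line frame_inners by auto
  then show Luv_Lv: "Luv u v \<bullet> Lv u v = c u * E u" using schwarz by simp
  have "Luv u v \<bullet> Lu u v + Lu u v \<bullet> Luv u v = 0"
    by (rule inner_pv_eq_0_if_constant[OF smooth(2) smooth(2) uv, of "E u"]) (use v_line frame_inners in auto)
  then show Luv_Lu: "Luv u v \<bullet> Lu u v = 0" by (simp add: inner_commute)
  have "Lvv u v \<bullet> Lv u v + Lv u v \<bullet> Lvv u v = 0"
    by (rule inner_pv_eq_0_if_constant[OF smooth(3) smooth(3) uv, of "E u"]) (use v_line frame_inners in auto)
  then show "Lvv u v \<bullet> Lv u v = 0" by (simp add: inner_commute)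
  have "Luu u v \<bullet> Lv u v + Lu u v \<bullet> pu Lv u v = 0"
    by (rule inner_pu_eq_0_if_constant[OF smooth(2) smooth(3) uv, of 0]) (use u_line frame_inners in auto)
  then show "Luu u v \<bullet> Lv u v = 0" using Luv_Lu schwarz by (simp add: inner_commute)
  have "Luv u v \<bullet> Lv u v + Lu u v \<bullet> Lvv u v = 0"
    by (rule inner_pv_eq_0_if_constant[OF smooth(2) smooth(3) uv, of 0]) (use v_line frame_inners in auto)
  then show "Lvv u v \<bullet> Lu u v = - c u * E u" using Luv_Lv by (simp add: inner_commute)
qed

lemma frame_expansion:
  assumes uv: "(u,v) \<in> R"
  shows "X = (X \<bullet> l u v) *\<^sub>R l u v + ((X \<bullet> Lu u v) / E u) *\<^sub>R Lu u v
    + ((X \<bullet> Lv u v) / E u) *\<^sub>R Lv u v + (X \<bullet> n u v) *\<^sub>R n u v"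
  using uv frame_inners[OF uv] tangents_orthogonal_position[OF uv] E_pos[of u]
  by (intro orthogonal_frame_expansion) (auto simp: inner_commute)

lemma gauss_formulas:
  assumes uv: "(u,v) \<in> R"
  shows "Luv u v = c u *\<^sub>R Lv u v"
    and "Luu u v = (- E u) *\<^sub>R l u v + c u *\<^sub>R Lu u v + n u v"
    and "Lvv u v = (- E u) *\<^sub>R l u v - c u *\<^sub>R Lu u v - n u v"
  using frame_expansion[OF uv, of "Luv u v"] frame_expansion[OF uv, of "Luu u v"]
    frame_expansion[OF uv, of "Lvv u v"] second_derivative_inners[OF uv] frame_inners[OF uv]
    E_pos[of u] uv by auto

lemma c_has_real_derivative_deriv:
  assumes u: "u \<in> {-a<..<a}"
  shows "(c has_real_derivative deriv c u) (at u)"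
proof -
  have u0: "(u,0) \<in> R" using u b_pos by auto
  have "((\<lambda>x. Luu x 0 \<bullet> Lu x 0) has_real_derivative pu Luu u 0 \<bullet> Lu u 0 + Luu u 0 \<bullet> Luu u 0) (at u)"
    using has_real_derivative_inner[OF smooth_has_pu smooth_has_pu] smooth_derivatives u0 by blast
  from DERIV_divide[OF this E_has_real_derivative[OF u]]
  have "(c has_real_derivative ((pu Luu u 0 \<bullet> Lu u 0 + Luu u 0 \<bullet> Luu u 0) * E u
      - (Luu u 0 \<bullet> Lu u 0) * (2 * c u * E u)) / (E u * E u)) (at u)"
    unfolding c_def[abs_def] using E_pos[OF u] by auto
  then show ?thesis by (simp add: DERIV_imp_deriv)
qed

lemma weingarten_v:
  assumes uv: "(u,v) \<in> R"
  shows "((\<lambda>y. n u y) has_vector_derivative (1 / E u) *\<^sub>R Lv u v) (at v)"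
proof -
  define N where "N = pv Luu u v + E u *\<^sub>R Lv u v - c u *\<^sub>R Luv u v"
  have v_line: "(u, y) \<in> R" if "y \<in> {-b<..<b}" for y using uv that by auto
  have "((\<lambda>y. Luu u y + E u *\<^sub>R l u y - c u *\<^sub>R Lu u y) has_vector_derivative N) (at v)"
    unfolding N_def using uv smooth_l smooth_derivatives
    by (intro derivative_intros smooth_has_pv) auto
  then have dn: "((\<lambda>y. n u y) has_vector_derivative N) (at v)"
    by (rule has_vector_derivative_transform_within_open[where S="{-b<..<b}"])
       (use uv v_line gauss_formulas(2) in \<open>auto simp: algebra_simps\<close>)
  have "N \<bullet> l u v + n u v \<bullet> Lv u v = 0"
    using inner_derivative_eq_0_if_constant[OF dn smooth_has_pv[OF smooth_l uv], of "{-b<..<b}" 0]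
      uv v_line frame_inners by auto
  moreover have "N \<bullet> Lu u v + n u v \<bullet> Luv u v = 0"
    using inner_derivative_eq_0_if_constant[OF dn smooth_has_pv[OF smooth_derivatives(1) uv], of "{-b<..<b}" 0]
      uv v_line frame_inners by auto
  moreover have "N \<bullet> Lv u v + n u v \<bullet> Lvv u v = 0"
    using inner_derivative_eq_0_if_constant[OF dn smooth_has_pv[OF smooth_derivatives(2) uv], of "{-b<..<b}" 0]
      uv v_line frame_inners by auto
  moreover have "N \<bullet> n u v + n u v \<bullet> N = 0"
    using inner_derivative_eq_0_if_constant[OF dn dn, of "{-b<..<b}" 1] uv v_line frame_inners by auto
  ultimately have "N \<bullet> l u v = 0" "N \<bullet> Lu u v = 0" "N \<bullet> Lv u v = 1" "N \<bullet> n u v = 0"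
    using frame_inners[OF uv] by (simp_all add: inner_commute)
  then have "N = (1 / E u) *\<^sub>R Lv u v" using frame_expansion[OF uv, of N] by simp
  then show ?thesis using dn by simp
qed

text \<open>Obtained by computing \<open>l\<^sub>u\<^sub>u\<^sub>v\<close> in two ways.\<close>
lemma gauss_equation:
  assumes u: "u \<in> {-a<..<a}"
  shows "(c has_real_derivative 1 / E u - E u) (at u)"
proof -
  have uv: "(u,0) \<in> R" using u b_pos by auto
  have u_line: "(x, 0) \<in> R" if "x \<in> {-a<..<a}" for x using b_pos that by auto
  have v_line: "(u, y) \<in> R" if "y \<in> {-b<..<b}" for y using u that by auto
  have "((\<lambda>x. c x *\<^sub>R Lv x 0) has_vector_derivative c u *\<^sub>R pu Lv u 0 + deriv c u *\<^sub>R Lv u 0) (at u)"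
    using c_has_real_derivative_deriv[OF u] smooth_has_pu[OF smooth_derivatives(2) uv]
    by (rule has_vector_derivative_scaleR)
  from has_vector_derivative_unique_on_open[OF smooth_has_pu[OF smooth_derivatives(4) uv] this,
      where S="{-a<..<a}"]
  have Luvu: "pu Luv u 0 = c u *\<^sub>R pu Lv u 0 + deriv c u *\<^sub>R Lv u 0"
    using u u_line gauss_formulas(1) by auto
  have "((\<lambda>y. (- E u) *\<^sub>R l u y + c u *\<^sub>R Lu u y + n u y) has_vector_derivative
      (- E u) *\<^sub>R Lv u 0 + c u *\<^sub>R Luv u 0 + (1 / E u) *\<^sub>R Lv u 0) (at 0)"
    using smooth_has_pv[OF smooth_l uv] smooth_has_pv[OF smooth_derivatives(1) uv] weingarten_v[OF uv]
    by (intro derivative_intros) auto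
  from has_vector_derivative_unique_on_open[OF smooth_has_pv[OF smooth_derivatives(3) uv] this,
      where S="{-b<..<b}"]
  have Luuv: "pv Luu u 0 = (- E u) *\<^sub>R Lv u 0 + c u *\<^sub>R Luv u 0 + (1 / E u) *\<^sub>R Lv u 0"
    using b_pos v_line gauss_formulas(2) by auto
  have "pv Luu u 0 = pu Luv u 0" using smooth_pv_pu_eq_pu_pv[OF smooth_derivatives(1) uv] by simp
  moreover have "pu Lv u 0 = Luv u 0" using smooth_pv_pu_eq_pu_pv[OF smooth_l uv] by simp
  ultimately have "(deriv c u - (1 / E u - E u)) *\<^sub>R Lv u 0 = 0"
    using Luvu Luuv gauss_formulas(1)[OF uv] by (simp add: algebra_simps)
  moreover have "Lv u 0 \<noteq> 0" using frame_inners(2)[OF uv] E_pos[OF u] by auto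
  ultimately have "deriv c u = 1 / E u - E u" by simp
  then show ?thesis using c_has_real_derivative_deriv[OF u] by simp
qed

lemma weingarten_u:
  assumes uv: "(u,v) \<in> R"
  shows "((\<lambda>x. n x v) has_vector_derivative (- 1 / E u) *\<^sub>R Lu u v) (at u)"
proof -
  have u: "u \<in> {-a<..<a}" using uv by auto
  have u_line: "(x, v) \<in> R" if "x \<in> {-a<..<a}" for x using uv that by auto
  define N where "N = pu Luu u v + (E u *\<^sub>R Lu u v + (2 * c u * E u) *\<^sub>R l u v)
    - (c u *\<^sub>R Luu u v + (1 / E u - E u) *\<^sub>R Lu u v)"
  have "((\<lambda>x. Luu x v + E x *\<^sub>R l x v - c x *\<^sub>R Lu x v) has_vector_derivative N) (at u)"
    unfolding N_def using smooth_l smooth_derivatives uv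
    by (intro derivative_intros smooth_has_pu E_has_real_derivative[OF u] gauss_equation[OF u])
  then have dn: "((\<lambda>x. n x v) has_vector_derivative N) (at u)"
    by (rule has_vector_derivative_transform_within_open[where S="{-a<..<a}"])
       (use u u_line gauss_formulas(2) in \<open>auto simp: algebra_simps\<close>)
  have "N \<bullet> l u v + n u v \<bullet> Lu u v = 0"
    using inner_derivative_eq_0_if_constant[OF dn smooth_has_pu[OF smooth_l uv], of "{-a<..<a}" 0]
      u u_line frame_inners by auto
  moreover have "N \<bullet> Lu u v + n u v \<bullet> Luu u v = 0"
    using inner_derivative_eq_0_if_constant[OF dn smooth_has_pu[OF smooth_derivatives(1) uv], of "{-a<..<a}" 0]
      u u_line frame_inners by auto
  moreover have "N \<bullet> Lv u v + n u v \<bullet> pu Lv u v = 0"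
    using inner_derivative_eq_0_if_constant[OF dn smooth_has_pu[OF smooth_derivatives(2) uv], of "{-a<..<a}" 0]
      u u_line frame_inners by auto
  moreover have "N \<bullet> n u v + n u v \<bullet> N = 0"
    using inner_derivative_eq_0_if_constant[OF dn dn, of "{-a<..<a}" 1] u u_line frame_inners by auto
  moreover have "pu Lv u v = Luv u v" using smooth_pv_pu_eq_pu_pv[OF smooth_l uv] by simp
  ultimately have "N \<bullet> l u v = 0" "N \<bullet> Lu u v = -1" "N \<bullet> Lv u v = 0" "N \<bullet> n u v = 0"
    using frame_inners[OF uv] by (simp_all add: inner_commute)
  then have "N = (- 1 / E u) *\<^sub>R Lu u v" using frame_expansion[OF uv, of N] by simp
  then show ?thesis using dn by simp
qed

lemma first_integral:
  assumes u: "u \<in> {-a<..<a}"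
  shows "(c u)\<^sup>2 + E u + 1 / E u = (c 0)\<^sup>2 + E 0 + 1 / E 0"
proof -
  define B where "B x = (c x)\<^sup>2 + E x + 1 / E x" for x
  have "(B has_real_derivative 0) (at x within {-a<..<a})" if x: "x \<in> {-a<..<a}" for x
  proof -
    have "(B has_real_derivative 2 * c x * (1 / E x - E x) + 2 * c x * E x
        - 2 * c x * E x / (E x * E x)) (at x)"
      unfolding B_def[abs_def] using gauss_equation[OF x] E_has_real_derivative[OF x] E_pos[OF x]
      by (auto intro!: derivative_eq_intros simp: power2_eq_square field_simps)
    then show ?thesis using E_pos[OF x] by (simp add: has_field_derivative_at_within field_simps)
  qed
  then obtain k where "\<And>x. x \<in> {-a<..<a} \<Longrightarrow> B x = k"
    using has_field_derivative_zero_constant[of "{-a<..<a}" B] by auto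
  then show ?thesis using u a_pos unfolding B_def by force
qed

lemma Lvvv_eq:
  assumes uv: "(u,v) \<in> R"
  shows "pv Lvv u v = (- ((c u)\<^sup>2 + E u + 1 / E u)) *\<^sub>R Lv u v"
proof -
  have v_line: "(u, y) \<in> R" if "y \<in> {-b<..<b}" for y using uv that by auto
  have "((\<lambda>y. (- E u) *\<^sub>R l u y - c u *\<^sub>R Lu u y - n u y) has_vector_derivative
      (- E u) *\<^sub>R Lv u v - c u *\<^sub>R Luv u v - (1 / E u) *\<^sub>R Lv u v) (at v)"
    using smooth_has_pv[OF smooth_l uv] smooth_has_pv[OF smooth_derivatives(1) uv] weingarten_v[OF uv]
    by (intro derivative_intros)
  from has_vector_derivative_unique_on_open[OF smooth_has_pv[OF smooth_derivatives(5) uv] this,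
      where S="{-b<..<b}"]
  have "pv Lvv u v = (- E u) *\<^sub>R Lv u v - c u *\<^sub>R Luv u v - (1 / E u) *\<^sub>R Lv u v"
    using uv v_line gauss_formulas(3) by auto
  then show ?thesis using gauss_formulas(1)[OF uv] by (simp add: algebra_simps power2_eq_square)
qed

lemma Lu_minus_c_l_independent_of_v:
  assumes uv: "(u,v) \<in> R"
  shows "Lu u v - c u *\<^sub>R l u v = Lu u 0 - c u *\<^sub>R l u 0"
proof -
  have "((\<lambda>y. Lu u y - c u *\<^sub>R l u y) has_vector_derivative 0) (at y within {-b<..<b})"
    if y: "y \<in> {-b<..<b}" for y
  proof -
    have uy: "(u,y) \<in> R" using uv y by auto
    have "((\<lambda>y. Lu u y - c u *\<^sub>R l u y) has_vector_derivative Luv u y - c u *\<^sub>R Lv u y) (at y)"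
      using smooth_has_pv[OF smooth_derivatives(1) uy] smooth_has_pv[OF smooth_l uy]
      by (intro derivative_intros)
    then show ?thesis using gauss_formulas(1)[OF uy] by (simp add: has_vector_derivative_at_within)
  qed
  then obtain K where "\<And>y. y \<in> {-b<..<b} \<Longrightarrow> Lu u y - c u *\<^sub>R l u y = K"
    using has_vector_derivative_zero_constant[of "{-b<..<b}" "\<lambda>y. Lu u y - c u *\<^sub>R l u y"] by auto
  then show ?thesis using uv b_pos by fastforce
qed

lemma inverse_sqrt_E_has_real_derivative:
  assumes u: "u \<in> {-a<..<a}"
  shows "((\<lambda>x. 1 / sqrt (E x)) has_real_derivative - c u / sqrt (E u)) (at u)"
  using E_has_real_derivative[OF u] E_pos[OF u]
  by (auto intro!: derivative_eq_intros simp: field_simps)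

lemma separation:
  assumes uv: "(u,v) \<in> R"
  shows "(1 / sqrt (E u)) *\<^sub>R (l u v - l u 0) = (1 / sqrt (E 0)) *\<^sub>R (l 0 v - l 0 0)"
proof -
  define D where "D x = (1 / sqrt (E x)) *\<^sub>R (l x v - l x 0)" for x
  have "(D has_vector_derivative 0) (at x within {-a<..<a})" if x: "x \<in> {-a<..<a}" for x
  proof -
    have xv: "(x,v) \<in> R" "(x,0) \<in> R" using uv x b_pos by auto
    have "(D has_vector_derivative (1 / sqrt (E x)) *\<^sub>R (Lu x v - Lu x 0)
        + (- c x / sqrt (E x)) *\<^sub>R (l x v - l x 0)) (at x)"
      unfolding D_def[abs_def] using smooth_has_pu[OF smooth_l xv(1)] smooth_has_pu[OF smooth_l xv(2)]
      by (intro derivative_intros inverse_sqrt_E_has_real_derivative[OF x])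
    moreover have "(1 / sqrt (E x)) *\<^sub>R (Lu x v - Lu x 0) + (- c x / sqrt (E x)) *\<^sub>R (l x v - l x 0)
        = (1 / sqrt (E x)) *\<^sub>R ((Lu x v - c x *\<^sub>R l x v) - (Lu x 0 - c x *\<^sub>R l x 0))"
      by (simp add: algebra_simps)
    ultimately show ?thesis
      using Lu_minus_c_l_independent_of_v[OF xv(1)] by (simp add: has_vector_derivative_at_within)
  qed
  then obtain K where "\<And>x. x \<in> {-a<..<a} \<Longrightarrow> D x = K"
    using has_vector_derivative_zero_constant[of "{-a<..<a}" D] by auto
  then show ?thesis using uv a_pos unfolding D_def by force
qed

end

section \<open>The normalized chart\<close>

locale normalized_chart = principal_chart +
  assumes initial: "l 0 0 = e1" "pu l 0 0 = sqrt (E 0) *\<^sub>R e2" "pv l 0 0 = sqrt (E 0) *\<^sub>R e3"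
    "n 0 0 = e4"
begin

definition z :: "real \<Rightarrow> real" where "z = (\<lambda>u. ln (E u))"
definition s :: real where "s = z 0"
definition t :: real where "t = deriv z 0 / 2"
definition \<beta> :: real where "\<beta> = sqrt (t\<^sup>2 + 2 * cosh s)"

lemma zero_in_R: "(0, 0) \<in> R" and zero_in_interval: "0 \<in> {-a<..<a}"
  using a_pos b_pos by auto

lemma z_has_real_derivative:
  assumes u: "u \<in> {-a<..<a}"
  shows "(z has_real_derivative 2 * c u) (at u)"
  unfolding z_def using E_has_real_derivative[OF u] E_pos[OF u]
  by (auto intro!: derivative_eq_intros)

lemma deriv_z: "u \<in> {-a<..<a} \<Longrightarrow> deriv z u = 2 * c u"
  using z_has_real_derivative DERIV_imp_deriv by blast

lemma sinh_gordon:
  assumes u: "u \<in> {-a<..<a}"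
  shows "(z has_real_derivative deriv z u) (at u)" "(deriv z has_real_derivative deriv (deriv z) u) (at u)"
    "deriv (deriv z) u + 4 * sinh (z u) = 0"
proof -
  show "(z has_real_derivative deriv z u) (at u)" using z_has_real_derivative[OF u] deriv_z[OF u] by simp
  have "((\<lambda>x. 2 * c x) has_real_derivative 2 * (1 / E u - E u)) (at u)"
    using gauss_equation[OF u] by (rule DERIV_cmult)
  then have dz': "(deriv z has_real_derivative 2 * (1 / E u - E u)) (at u)"
    by (rule has_field_derivative_transform_within_open[where S="{-a<..<a}"]) (use u deriv_z in auto)
  then show "(deriv z has_real_derivative deriv (deriv z) u) (at u)" by (simp add: DERIV_imp_deriv)
  show "deriv (deriv z) u + 4 * sinh (z u) = 0"
    using DERIV_imp_deriv[OF dz'] sinh_ln_real[OF E_pos[OF u]] unfolding z_def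
    by (simp add: field_simps)
qed

lemma sqrt_E0: "exp (s / 2) = sqrt (E 0)" "exp (- s / 2) = 1 / sqrt (E 0)" "exp (- s) = 1 / E 0"
  using E_pos[OF zero_in_interval] exp_half_ln[of "E 0"]
  by (simp_all add: s_def z_def exp_minus inverse_eq_divide)

lemma t_eq: "t = c 0"
  using deriv_z[OF zero_in_interval] by (simp add: t_def)

lemma beta_sq:
  assumes u: "u \<in> {-a<..<a}"
  shows "\<beta>\<^sup>2 = (c u)\<^sup>2 + E u + 1 / E u"
proof -
  have "2 * cosh s = E 0 + 1 / E 0"
    using cosh_ln_real[OF E_pos[OF zero_in_interval]] by (simp add: s_def z_def inverse_eq_divide)
  then have "t\<^sup>2 + 2 * cosh s = (c 0)\<^sup>2 + E 0 + 1 / E 0" by (simp add: t_eq)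
  moreover have "(c 0)\<^sup>2 + E 0 + 1 / E 0 \<ge> 0"
    using E_pos[OF zero_in_interval] by (simp add: add_nonneg_nonneg)
  ultimately have "\<beta>\<^sup>2 = (c 0)\<^sup>2 + E 0 + 1 / E 0" by (simp add: \<beta>_def)
  then show ?thesis using first_integral[OF u] by simp
qed

lemma beta_pos: "\<beta> > 0"
proof -
  have "\<beta>\<^sup>2 > 0" using beta_sq[OF zero_in_interval] E_pos[OF zero_in_interval]
    by (simp add: add_nonneg_pos)
  moreover have "\<beta> \<ge> 0" by (simp add: \<beta>_def)
  ultimately show ?thesis by (simp add: less_le)
qed

definition A :: "real^4" where "A = exp (s / 2) *\<^sub>R e1 + t *\<^sub>R e2 + exp (- s / 2) *\<^sub>R e4"

lemma circle_at_0:
  assumes v: "v \<in> {-b<..<b}"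
  shows "l 0 v = e1 + ((cos (\<beta> * v) - 1) / \<beta>\<^sup>2) *\<^sub>R (sqrt (E 0) *\<^sub>R A)
    + (sin (\<beta> * v) / \<beta>) *\<^sub>R (sqrt (E 0) *\<^sub>R e3)"
proof -
  define \<Gamma> where "\<Gamma> y = e1 + ((cos (\<beta> * y) - 1) / \<beta>\<^sup>2) *\<^sub>R (sqrt (E 0) *\<^sub>R A)
    + (sin (\<beta> * y) / \<beta>) *\<^sub>R (sqrt (E 0) *\<^sub>R e3)" for y
  define \<Gamma>1 where "\<Gamma>1 y = (- sin (\<beta> * y) / \<beta>) *\<^sub>R (sqrt (E 0) *\<^sub>R A) + cos (\<beta> * y) *\<^sub>R (sqrt (E 0) *\<^sub>R e3)"
    for y
  define \<Gamma>2 where "\<Gamma>2 y = (- cos (\<beta> * y)) *\<^sub>R (sqrt (E 0) *\<^sub>R A) - (\<beta> * sin (\<beta> * y)) *\<^sub>R (sqrt (E 0) *\<^sub>R e3)"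
    for y
  have \<beta>: "\<beta> \<noteq> 0" using beta_pos by simp
  have d\<Gamma>: "(\<Gamma> has_vector_derivative \<Gamma>1 y) (at y)" "(\<Gamma>1 has_vector_derivative \<Gamma>2 y) (at y)"
    "(\<Gamma>2 has_vector_derivative (- \<beta>\<^sup>2) *\<^sub>R \<Gamma>1 y) (at y)" for y
    unfolding \<Gamma>_def[abs_def] \<Gamma>1_def[abs_def] \<Gamma>2_def[abs_def]
    by (rule circle_has_vector_derivatives[OF \<beta>])+
  have line: "(0, y) \<in> R" if "y \<in> {-b<..<b}" for y using that a_pos by auto
  have "l 0 v - \<Gamma> v = 0"
  proof (rule third_order_ode_zero_initial[where k="\<beta>\<^sup>2" and f'="\<lambda>y. Lv 0 y - \<Gamma>1 y"
        and f''="\<lambda>y. Lvv 0 y - \<Gamma>2 y", OF _ _ _ _ _ _ _ _ v])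
    show "\<beta>\<^sup>2 > 0" "0 \<in> {-b<..<b}" using beta_pos b_pos by auto
    fix y assume y: "y \<in> {-b<..<b}"
    show "((\<lambda>y. l 0 y - \<Gamma> y) has_vector_derivative Lv 0 y - \<Gamma>1 y) (at y)"
      using smooth_has_pv[OF smooth_l line[OF y]] d\<Gamma>(1) by (rule has_vector_derivative_diff)
    show "((\<lambda>y. Lv 0 y - \<Gamma>1 y) has_vector_derivative Lvv 0 y - \<Gamma>2 y) (at y)"
      using smooth_has_pv[OF smooth_derivatives(2) line[OF y]] d\<Gamma>(2) by (rule has_vector_derivative_diff)
    have "pv Lvv 0 y = (- \<beta>\<^sup>2) *\<^sub>R Lv 0 y"
      using Lvvv_eq[OF line[OF y]] beta_sq[OF zero_in_interval] by simp
    then show "((\<lambda>y. Lvv 0 y - \<Gamma>2 y) has_vector_derivative (- \<beta>\<^sup>2) *\<^sub>R (Lv 0 y - \<Gamma>1 y)) (at y)"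
      using has_vector_derivative_diff[OF smooth_has_pv[OF smooth_derivatives(5) line[OF y]] d\<Gamma>(3)]
      by (simp add: scaleR_diff_right)
  next
    have E0: "E 0 > 0" using E_pos[OF zero_in_interval] .
    show "l 0 0 - \<Gamma> 0 = 0" "Lv 0 0 - \<Gamma>1 0 = 0" using initial by (simp_all add: \<Gamma>_def \<Gamma>1_def)
    have "Lvv 0 0 = (- E 0) *\<^sub>R e1 - (t * sqrt (E 0)) *\<^sub>R e2 - e4"
      using gauss_formulas(3)[OF zero_in_R] initial by (simp add: t_eq)
    moreover have "\<Gamma>2 0 = (- E 0) *\<^sub>R e1 - (t * sqrt (E 0)) *\<^sub>R e2 - e4"
      unfolding \<Gamma>2_def A_def sqrt_E0 using E0 by (simp add: algebra_simps)
    ultimately show "Lvv 0 0 - \<Gamma>2 0 = 0" by simp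
  qed
  then show ?thesis by (simp add: \<Gamma>_def)
qed

definition p :: "real \<Rightarrow> real^4" where "p u = (1 / sqrt (E u)) *\<^sub>R l u 0 - (1 / \<beta>\<^sup>2) *\<^sub>R A"
definition p1 :: "real \<Rightarrow> real^4" where "p1 u = (1 / sqrt (E u)) *\<^sub>R (Lu u 0 - c u *\<^sub>R l u 0)"
definition p2 :: "real \<Rightarrow> real^4" where
  "p2 u = (1 / sqrt (E u)) *\<^sub>R (Luu u 0 - (2 * c u) *\<^sub>R Lu u 0 + ((c u)\<^sup>2 - (1 / E u - E u)) *\<^sub>R l u 0)"

lemma zero_v_in_R: "u \<in> {-a<..<a} \<Longrightarrow> (u, 0) \<in> R"
  using b_pos by auto

lemma p_has_vector_derivative:
  assumes u: "u \<in> {-a<..<a}"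
  shows "(p has_vector_derivative p1 u) (at u)"
proof -
  have "(p has_vector_derivative (1 / sqrt (E u)) *\<^sub>R Lu u 0 + (- c u / sqrt (E u)) *\<^sub>R l u 0 - 0) (at u)"
    unfolding p_def[abs_def] using smooth_has_pu[OF smooth_l zero_v_in_R[OF u]]
    by (intro derivative_intros inverse_sqrt_E_has_real_derivative[OF u])
  then show ?thesis unfolding p1_def by (simp add: algebra_simps)
qed

lemma p1_has_vector_derivative:
  assumes u: "u \<in> {-a<..<a}"
  shows "(p1 has_vector_derivative p2 u) (at u)"
proof -
  have "(p1 has_vector_derivative (1 / sqrt (E u)) *\<^sub>R (Luu u 0 - (c u *\<^sub>R Lu u 0 + (1 / E u - E u) *\<^sub>R l u 0))
      + (- c u / sqrt (E u)) *\<^sub>R (Lu u 0 - c u *\<^sub>R l u 0)) (at u)"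
    unfolding p1_def[abs_def] using smooth_has_pu[OF smooth_l zero_v_in_R[OF u]]
      smooth_has_pu[OF smooth_derivatives(1) zero_v_in_R[OF u]]
    by (intro derivative_intros inverse_sqrt_E_has_real_derivative[OF u] gauss_equation[OF u])
  moreover have "(1 / sqrt (E u)) *\<^sub>R (Luu u 0 - (c u *\<^sub>R Lu u 0 + (1 / E u - E u) *\<^sub>R l u 0))
      + (- c u / sqrt (E u)) *\<^sub>R (Lu u 0 - c u *\<^sub>R l u 0) = p2 u"
    unfolding p2_def by (simp add: vec_eq_iff field_simps power2_eq_square)
  ultimately show ?thesis by simp
qed

lemma normal_combination_constant:
  assumes u: "u \<in> {-a<..<a}"
  shows "(1 / sqrt (E u)) *\<^sub>R (n u 0 + c u *\<^sub>R Lu u 0 + E u *\<^sub>R l u 0) = A"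
proof -
  define F where "F x = (1 / sqrt (E x)) *\<^sub>R (n x 0 + c x *\<^sub>R Lu x 0 + E x *\<^sub>R l x 0)" for x
  have "(F has_vector_derivative 0) (at x within {-a<..<a})" if x: "x \<in> {-a<..<a}" for x
  proof -
    note x0 = zero_v_in_R[OF x]
    have "(F has_vector_derivative (1 / sqrt (E x)) *\<^sub>R ((- 1 / E x) *\<^sub>R Lu x 0
        + (c x *\<^sub>R Luu x 0 + (1 / E x - E x) *\<^sub>R Lu x 0) + (E x *\<^sub>R Lu x 0 + (2 * c x * E x) *\<^sub>R l x 0))
        + (- c x / sqrt (E x)) *\<^sub>R (n x 0 + c x *\<^sub>R Lu x 0 + E x *\<^sub>R l x 0)) (at x)"
      unfolding F_def[abs_def] using weingarten_u[OF x0] smooth_has_pu[OF smooth_l x0]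
        smooth_has_pu[OF smooth_derivatives(1) x0]
      by (intro derivative_intros inverse_sqrt_E_has_real_derivative[OF x] gauss_equation[OF x]
          E_has_real_derivative[OF x])
    moreover have "(1 / sqrt (E x)) *\<^sub>R ((- 1 / E x) *\<^sub>R Lu x 0
        + (c x *\<^sub>R Luu x 0 + (1 / E x - E x) *\<^sub>R Lu x 0) + (E x *\<^sub>R Lu x 0 + (2 * c x * E x) *\<^sub>R l x 0))
        + (- c x / sqrt (E x)) *\<^sub>R (n x 0 + c x *\<^sub>R Lu x 0 + E x *\<^sub>R l x 0) = 0"
      unfolding gauss_formulas(2)[OF x0] using E_pos[OF x] by (simp add: vec_eq_iff field_simps)
    ultimately show ?thesis by (simp add: has_vector_derivative_at_within)
  qed
  then obtain K where K: "\<And>x. x \<in> {-a<..<a} \<Longrightarrow> F x = K"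
    using has_vector_derivative_zero_constant[of "{-a<..<a}" F] by auto
  have "F 0 = A"
    unfolding F_def A_def sqrt_E0 initial t_eq using E_pos[OF zero_in_interval]
    by (simp add: vec_eq_iff field_simps)
  then show ?thesis using K[OF u] K[OF zero_in_interval] unfolding F_def by simp
qed

lemma p_ode:
  assumes u: "u \<in> {-a<..<a}"
  shows "p2 u + deriv z u *\<^sub>R p1 u + \<beta>\<^sup>2 *\<^sub>R p u = 0"
proof -
  have \<beta>: "\<beta>\<^sup>2 \<noteq> 0" using beta_pos by simp
  have "p2 u + deriv z u *\<^sub>R p1 u + \<beta>\<^sup>2 *\<^sub>R p u = (1 / sqrt (E u)) *\<^sub>R (Luu u 0
      - (2 * c u) *\<^sub>R Lu u 0 + ((c u)\<^sup>2 - (1 / E u - E u)) *\<^sub>R l u 0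
      + (2 * c u) *\<^sub>R (Lu u 0 - c u *\<^sub>R l u 0) + \<beta>\<^sup>2 *\<^sub>R l u 0) - A"
    unfolding p_def p1_def p2_def deriv_z[OF u] using \<beta> by (simp add: algebra_simps)
  also have "Luu u 0 - (2 * c u) *\<^sub>R Lu u 0 + ((c u)\<^sup>2 - (1 / E u - E u)) *\<^sub>R l u 0
      + (2 * c u) *\<^sub>R (Lu u 0 - c u *\<^sub>R l u 0) + \<beta>\<^sup>2 *\<^sub>R l u 0 = n u 0 + c u *\<^sub>R Lu u 0 + E u *\<^sub>R l u 0"
    unfolding beta_sq[OF u] gauss_formulas(2)[OF zero_v_in_R[OF u]]
    by (simp add: vec_eq_iff field_simps power2_eq_square)
  finally show ?thesis using normal_combination_constant[OF u] by simp
qed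

lemma p_initial:
  "p 0 = (1 / \<beta>\<^sup>2) *\<^sub>R ((exp (- s / 2) * (t\<^sup>2 + exp (- s))) *\<^sub>R e1 - t *\<^sub>R e2 - exp (- s / 2) *\<^sub>R e4)"
proof -
  define q where "q = sqrt (E 0)"
  have q: "q > 0" "E 0 = q * q" using E_pos[OF zero_in_interval] by (auto simp: q_def)
  have \<beta>_pos: "\<beta>\<^sup>2 > 0" using beta_pos by simp
  have \<beta>_eq: "\<beta>\<^sup>2 = t\<^sup>2 + q * q + 1 / (q * q)" using beta_sq[OF zero_in_interval] t_eq q(2) by simp
  have "p 0 = (1 / q - q / \<beta>\<^sup>2) *\<^sub>R e1 - (t / \<beta>\<^sup>2) *\<^sub>R e2 - (1 / (q * \<beta>\<^sup>2)) *\<^sub>R e4"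
    unfolding p_def A_def sqrt_E0 initial q_def[symmetric] using q(1) \<beta>_pos
    by (simp add: vec_eq_iff field_simps)
  also have "1 / q - q / \<beta>\<^sup>2 = (\<beta>\<^sup>2 - q * q) / (q * \<beta>\<^sup>2)"
    using q(1) \<beta>_pos by (simp add: field_simps)
  also have "\<beta>\<^sup>2 - q * q = t\<^sup>2 + 1 / (q * q)" using \<beta>_eq by simp
  finally show ?thesis
    unfolding sqrt_E0 q_def[symmetric] q(2) using q(1) \<beta>_pos by (simp add: vec_eq_iff field_simps)
qed

lemma p1_initial: "p1 0 = (- t * exp (- s / 2)) *\<^sub>R e1 + e2"
  unfolding p1_def sqrt_E0 initial t_eq using E_pos[OF zero_in_interval]
  by (simp add: vec_eq_iff field_simps)

lemma l_representation:
  assumes uv: "(u,v) \<in> R"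
  shows "l u v = exp (z u / 2) *\<^sub>R p u
    + (exp (z u / 2) / \<beta>\<^sup>2) *\<^sub>R (cos (\<beta> * v) *\<^sub>R A + (\<beta> * sin (\<beta> * v)) *\<^sub>R e3)"
proof -
  have u: "u \<in> {-a<..<a}" and v: "v \<in> {-b<..<b}" using uv by auto
  have Eu: "E u > 0" and E0: "E 0 > 0" using E_pos u zero_in_interval by auto
  have "l u v = l u 0 + (sqrt (E u) / sqrt (E 0)) *\<^sub>R (l 0 v - l 0 0)"
    using arg_cong[OF separation[OF uv], of "\<lambda>x. sqrt (E u) *\<^sub>R x"] Eu by (simp add: algebra_simps)
  also have "\<dots> = sqrt (E u) *\<^sub>R (p u + (1 / \<beta>\<^sup>2) *\<^sub>R A)
      + sqrt (E u) *\<^sub>R (((cos (\<beta> * v) - 1) / \<beta>\<^sup>2) *\<^sub>R A + (sin (\<beta> * v) / \<beta>) *\<^sub>R e3)"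
    unfolding circle_at_0[OF v] initial p_def using Eu E0 beta_pos by (simp add: vec_eq_iff field_simps)
  also have "\<dots> = exp (z u / 2) *\<^sub>R p u
      + (exp (z u / 2) / \<beta>\<^sup>2) *\<^sub>R (cos (\<beta> * v) *\<^sub>R A + (\<beta> * sin (\<beta> * v)) *\<^sub>R e3)"
    unfolding z_def exp_half_ln[OF Eu] power2_eq_square using beta_pos
    by (simp add: vec_eq_iff field_simps)
  finally show ?thesis .
qed


lemma exists_linear_ode_representation:
  "\<exists>p p1 p2 :: real \<Rightarrow> real^4.
     (\<forall>u\<in>{-a<..<a}. (p has_vector_derivative p1 u) (at u) \<and> (p1 has_vector_derivative p2 u) (at u) \<and>
        p2 u + deriv z u *\<^sub>R p1 u + \<beta>\<^sup>2 *\<^sub>R p u = 0)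
   \<and> p 0 = (1 / \<beta>\<^sup>2) *\<^sub>R ((exp (- s / 2) * (t\<^sup>2 + exp (- s))) *\<^sub>R e1 - t *\<^sub>R e2 - exp (- s / 2) *\<^sub>R e4)
   \<and> p1 0 = (- t * exp (- s / 2)) *\<^sub>R e1 + e2
   \<and> (\<forall>(u,v)\<in>R. l u v = exp (z u / 2) *\<^sub>R p u
        + (exp (z u / 2) / \<beta>\<^sup>2) *\<^sub>R (cos (\<beta> * v) *\<^sub>R (exp (s / 2) *\<^sub>R e1 + t *\<^sub>R e2 + exp (- s / 2) *\<^sub>R e4)
          + (\<beta> * sin (\<beta> * v)) *\<^sub>R e3))"
  unfolding A_def[symmetric]
  using p_has_vector_derivative p1_has_vector_derivative p_ode p_initial p1_initial l_representation
  by (intro exI[of _ p] exI[of _ p1] exI[of _ p2]) auto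

end

section \<open>The sinh-Gordon equation\<close>

locale sinh_gordon_solution =
  fixes a :: real and z z' z'' :: "real \<Rightarrow> real"
  assumes a_pos: "a > 0"
    and z_deriv: "\<And>u. u \<in> {-a<..<a} \<Longrightarrow> (z has_real_derivative z' u) (at u)"
    and z'_deriv: "\<And>u. u \<in> {-a<..<a} \<Longrightarrow> (z' has_real_derivative z'' u) (at u)"
    and ode: "\<And>u. u \<in> {-a<..<a} \<Longrightarrow> z'' u + 4 * sinh (z u) = 0"
begin

lemma zero_in_interval: "0 \<in> {-a<..<a}"
  using a_pos by auto

definition K :: real where "K = (z' 0)\<^sup>2 / 4 + 2 * cosh (z 0)"

lemma energy_conservation:
  assumes u: "u \<in> {-a<..<a}"
  shows "(z' u)\<^sup>2 / 4 + 2 * cosh (z u) = K"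
proof -
  define H where "H u = (z' u)\<^sup>2 / 4 + 2 * cosh (z u)" for u
  have "(H has_real_derivative 0) (at x within {-a<..<a})" if x: "x \<in> {-a<..<a}" for x
  proof -
    have "(H has_real_derivative 2 * z' x * z'' x / 4 + 2 * (sinh (z x) * z' x)) (at x)"
      unfolding H_def[abs_def] using z_deriv[OF x] z'_deriv[OF x]
      by (auto intro!: derivative_eq_intros simp: power2_eq_square)
    moreover have "z'' x = - 4 * sinh (z x)" using ode[OF x] by simp
    ultimately show ?thesis by (simp add: has_field_derivative_at_within)
  qed
  then obtain k where "\<And>x. x \<in> {-a<..<a} \<Longrightarrow> H x = k"
    using has_field_derivative_zero_constant[of "{-a<..<a}" H] by auto
  then show ?thesis using u zero_in_interval unfolding H_def K_def by metis
qed

lemma K_ge_2: "K \<ge> 2"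
  unfolding K_def using cosh_real_ge_1[of "z 0"] by (simp add: add_increasing)

text \<open>\<open>\<alpha>\<close> is the larger root of \<open>\<alpha>\<^sup>2 - K \<alpha> + 1 = 0\<close>.\<close>
definition \<alpha> :: real where "\<alpha> = (K + sqrt (K\<^sup>2 - 4)) / 2"

lemma alpha: "\<alpha> \<ge> 1" "\<alpha> > 0" "\<alpha> * K = \<alpha>\<^sup>2 + 1"
proof -
  have K4: "K\<^sup>2 - 4 \<ge> 0" using K_ge_2 power_mono[OF _ _, of 2 K 2] by (simp add: power2_eq_square)
  have "sqrt (K\<^sup>2 - 4) \<ge> 0" using K4 by simp
  then have "2 \<le> K + sqrt (K\<^sup>2 - 4)" using K_ge_2 by linarith
  then show "\<alpha> \<ge> 1" unfolding \<alpha>_def by simp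
  then show "\<alpha> > 0" by simp
  show "\<alpha> * K = \<alpha>\<^sup>2 + 1" unfolding \<alpha>_def using real_sqrt_pow2[OF K4]
    by (simp add: power2_eq_square field_simps)
qed

text \<open>The substitution \<open>P = e\<^sup>z\<^sup>/\<^sup>2\<close> turns the equation into \<open>P'' = K P - 2 P\<^sup>3\<close>.\<close>
definition P :: "real \<Rightarrow> real" where "P u = exp (z u / 2)"

lemma P_pos: "P u > 0"
  by (simp add: P_def)

lemma P_sq: "P u * P u = exp (z u)"
  by (simp add: P_def exp_add[symmetric])

definition dP :: "real \<Rightarrow> real" where "dP u = P u * z' u / 2"

lemma P_has_real_derivative:
  "u \<in> {-a<..<a} \<Longrightarrow> (P has_real_derivative dP u) (at u)"
  unfolding P_def[abs_def] dP_def using z_deriv by (auto intro!: derivative_eq_intros)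

lemma dP_has_real_derivative:
  assumes u: "u \<in> {-a<..<a}"
  shows "(dP has_real_derivative K * P u - 2 * P u * P u * P u) (at u)"
proof -
  have "(dP has_real_derivative (dP u * z' u + P u * z'' u) / 2) (at u)"
    unfolding dP_def[abs_def] using P_has_real_derivative[OF u] z'_deriv[OF u]
    by (auto intro!: derivative_eq_intros simp: dP_def)
  moreover have "(dP u * z' u + P u * z'' u) / 2 = P u * ((z' u)\<^sup>2 / 4 + z'' u / 2)"
    by (simp add: dP_def power2_eq_square field_simps)
  also have "\<dots> = P u * (K - 2 * (cosh (z u) + sinh (z u)))"
    using energy_conservation[OF u] ode[OF u] by simp
  also have "\<dots> = K * P u - 2 * P u * P u * P u"
    using P_sq[of u] cosh_plus_sinh[of "z u"] by (simp add: algebra_simps)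
  ultimately show ?thesis by simp
qed

lemma initial_angle_exists:
  obtains w0 where "\<alpha> * (P 0 * P 0) = \<alpha>\<^sup>2 * (cos w0)\<^sup>2 + (sin w0)\<^sup>2"
    and "\<alpha> * (dP 0) = (1 - \<alpha>\<^sup>2) * (sin w0 * cos w0)"
proof (cases "\<alpha> = 1")
  case True
  then have "K = 2" using alpha(3) by simp
  then have "(z' 0)\<^sup>2 / 4 = 0" "cosh (z 0) = 1"
    using cosh_real_ge_1[of "z 0"] unfolding K_def by (smt (verit) zero_le_power2 divide_nonneg_pos)+
  then have "dP 0 = 0" "P 0 = 1" by (simp_all add: P_def dP_def)
  then show ?thesis using that[of 0] True by simp
next
  case False
  then have \<alpha>: "\<alpha> > 1" using alpha(1) by simp
  then have \<alpha>2: "\<alpha>\<^sup>2 - 1 > 0" by (simp add: power_less_one_iff one_less_power)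
  define E0 where "E0 = P 0 * P 0"
  have E0: "E0 > 0" unfolding E0_def using P_pos by simp
  have "2 * cosh (z 0) = E0 + 1 / E0"
    unfolding E0_def P_sq cosh_def by (simp add: exp_minus inverse_eq_divide)
  moreover have "(z' 0)\<^sup>2 = 4 * K - 4 * (2 * cosh (z 0))"
    using energy_conservation[OF zero_in_interval] by (simp add: field_simps)
  ultimately have "(z' 0)\<^sup>2 = 4 * K - 4 * (E0 + 1 / E0)" by simp
  then have dP0: "(2 * dP 0)\<^sup>2 = 4 * E0 * K - 4 * E0 * E0 - 4"
    using E0 by (simp add: dP_def E0_def[symmetric] power_mult_distrib power2_eq_square field_simps)
  define X where "X = (2 * \<alpha> * E0 - \<alpha>\<^sup>2 - 1) / (\<alpha>\<^sup>2 - 1)"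
  define Y where "Y = - 2 * \<alpha> * dP 0 / (\<alpha>\<^sup>2 - 1)"
  have "(2 * \<alpha> * E0 - \<alpha>\<^sup>2 - 1)\<^sup>2 + (- 2 * \<alpha> * dP 0)\<^sup>2 = (\<alpha>\<^sup>2 - 1)\<^sup>2"
    using dP0 alpha(3) by algebra
  then have "X\<^sup>2 + Y\<^sup>2 = 1"
    using \<alpha>2 unfolding X_def Y_def power_divide by (simp add: add_divide_distrib[symmetric])
  then obtain w where w: "(cos w)\<^sup>2 = (1 + X) / 2" "(sin w)\<^sup>2 = (1 - X) / 2" "sin w * cos w = Y / 2"
    by (rule half_angle_exists)
  show ?thesis
  proof (rule that[of w])
    have "X * (\<alpha>\<^sup>2 - 1) = 2 * \<alpha> * E0 - \<alpha>\<^sup>2 - 1" unfolding X_def using \<alpha>2 by simp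
    moreover have "\<alpha>\<^sup>2 * ((1 + X) / 2) + (1 - X) / 2 = (\<alpha>\<^sup>2 + 1) / 2 + X * (\<alpha>\<^sup>2 - 1) / 2"
      by (simp add: algebra_simps add_divide_distrib diff_divide_distrib)
    ultimately show "\<alpha> * (P 0 * P 0) = \<alpha>\<^sup>2 * (cos w)\<^sup>2 + (sin w)\<^sup>2"
      unfolding w E0_def[symmetric] by (simp add: field_simps)
    show "\<alpha> * (dP 0) = (1 - \<alpha>\<^sup>2) * (sin w * cos w)"
      unfolding w Y_def using \<alpha>2 by (simp add: field_simps)
  qed
qed

definition angle :: "real \<Rightarrow> real \<Rightarrow> real" where "angle w0 u = w0 + oriented_integral P u"

lemma angle_has_real_derivative:
  assumes u: "u \<in> {-a<..<a}"
  shows "(angle w0 has_real_derivative P u) (at u)"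
proof -
  have "continuous_on {-a<..<a} P"
    using P_has_real_derivative by (intro continuous_at_imp_continuous_on) (blast intro: DERIV_isCont)
  then show ?thesis unfolding angle_def[abs_def]
    using has_real_derivative_oriented_integral[OF _ zero_in_interval u]
    by (auto intro!: derivative_eq_intros)
qed

lemma angle_0: "angle w0 0 = w0"
  by (simp add: angle_def oriented_integral_def)

context
  fixes w0 :: real
  assumes w0: "\<alpha> * (P 0 * P 0) = \<alpha>\<^sup>2 * (cos w0)\<^sup>2 + (sin w0)\<^sup>2"
    "\<alpha> * (dP 0) = (1 - \<alpha>\<^sup>2) * (sin w0 * cos w0)"
begin

text \<open>The defects \<open>f1\<close>, \<open>f2\<close> of the identity and of its derivative satisfy
  \<open>f1' = 2 P f2\<close>, \<open>f2' = - 2 P f1\<close>; so \<open>f1\<^sup>2 + f2\<^sup>2\<close> is constant and vanishes at \<open>0\<close>.\<close>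
lemma angle_equation:
  assumes u: "u \<in> {-a<..<a}"
  shows "\<alpha> * (P u * P u) = \<alpha>\<^sup>2 * (cos (angle w0 u))\<^sup>2 + (sin (angle w0 u))\<^sup>2"
proof -
  define w where "w = angle w0"
  define f1 where "f1 x = \<alpha> * (P x * P x) - (\<alpha>\<^sup>2 * (cos (w x))\<^sup>2 + (sin (w x))\<^sup>2)" for x
  define f2 where "f2 x = \<alpha> * (dP x) - (1 - \<alpha>\<^sup>2) * (sin (w x) * cos (w x))" for x
  have df1: "(f1 has_real_derivative 2 * P x * f2 x) (at x)" if x: "x \<in> {-a<..<a}" for x
  proof -
    have "(f1 has_real_derivative \<alpha> * (dP x * P x + P x * (dP x))
        - (\<alpha>\<^sup>2 * (2 * cos (w x) * (- sin (w x) * P x)) + 2 * sin (w x) * (cos (w x) * P x))) (at x)"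
      unfolding f1_def[abs_def] w_def using P_has_real_derivative[OF x] angle_has_real_derivative[OF x]
      by (auto intro!: derivative_eq_intros simp: power2_eq_square)
    then show ?thesis unfolding f2_def by (simp add: algebra_simps power2_eq_square)
  qed
  have df2: "(f2 has_real_derivative - 2 * P x * f1 x) (at x)" if x: "x \<in> {-a<..<a}" for x
  proof -
    have "(f2 has_real_derivative \<alpha> * (K * P x - 2 * P x * P x * P x)
        - (1 - \<alpha>\<^sup>2) * (cos (w x) * P x * cos (w x) + sin (w x) * (- sin (w x) * P x))) (at x)"
      unfolding f2_def[abs_def] w_def using dP_has_real_derivative[OF x] angle_has_real_derivative[OF x]
      by (auto intro!: derivative_eq_intros)
    moreover have "\<alpha> * (K * P x - 2 * P x * P x * P x)
        - (1 - \<alpha>\<^sup>2) * (cos (w x) * P x * cos (w x) + sin (w x) * (- sin (w x) * P x)) = - 2 * P x * f1 x"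
      unfolding f1_def using alpha(3) sin_cos_squared_add[of "w x"] by algebra
    ultimately show ?thesis by simp
  qed
  have "((\<lambda>x. (f1 x)\<^sup>2 + (f2 x)\<^sup>2) has_real_derivative 0) (at x within {-a<..<a})"
    if x: "x \<in> {-a<..<a}" for x
  proof -
    have "((\<lambda>x. (f1 x)\<^sup>2 + (f2 x)\<^sup>2) has_real_derivative
        2 * f1 x * (2 * P x * f2 x) + 2 * f2 x * (- 2 * P x * f1 x)) (at x)"
      using df1[OF x] df2[OF x] by (auto intro!: derivative_eq_intros simp: power2_eq_square)
    then show ?thesis by (simp add: has_field_derivative_at_within algebra_simps)
  qed
  then obtain k where k: "\<And>x. x \<in> {-a<..<a} \<Longrightarrow> (f1 x)\<^sup>2 + (f2 x)\<^sup>2 = k"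
    using has_field_derivative_zero_constant[of "{-a<..<a}" "\<lambda>x. (f1 x)\<^sup>2 + (f2 x)\<^sup>2"] by auto
  have "f1 0 = 0" "f2 0 = 0" unfolding f1_def f2_def w_def angle_0 using w0 by simp_all
  then have "(f1 u)\<^sup>2 + (f2 u)\<^sup>2 = 0" using k[OF u] k[OF zero_in_interval] by simp
  then show ?thesis unfolding f1_def w_def by (simp add: add_nonneg_eq_0_iff)
qed

lemma hfun_angle:
  assumes u: "u \<in> {-a<..<a}"
  shows "hfun \<alpha> (angle w0 u) = u + hfun \<alpha> w0"
proof -
  have "((\<lambda>x. hfun \<alpha> (angle w0 x) - x) has_real_derivative 0) (at x within {-a<..<a})"
    if x: "x \<in> {-a<..<a}" for x
  proof -
    have "sqrt \<alpha> / sqrt (\<alpha>\<^sup>2 * (cos (angle w0 x))\<^sup>2 + (sin (angle w0 x))\<^sup>2) * P x - 1 = 0"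
      unfolding angle_equation[OF x, symmetric] using alpha(2) P_pos[of x]
      by (simp add: real_sqrt_mult)
    moreover have "((\<lambda>x. hfun \<alpha> (angle w0 x) - x) has_real_derivative
        sqrt \<alpha> / sqrt (\<alpha>\<^sup>2 * (cos (angle w0 x))\<^sup>2 + (sin (angle w0 x))\<^sup>2) * P x - 1) (at x)"
      by (intro DERIV_diff DERIV_chain2[OF hfun_has_real_derivative[OF alpha(2)]]
          angle_has_real_derivative[OF x] DERIV_ident)
    ultimately show ?thesis by (metis has_field_derivative_at_within)
  qed
  then obtain k where "\<And>x. x \<in> {-a<..<a} \<Longrightarrow> hfun \<alpha> (angle w0 x) - x = k"
    using has_field_derivative_zero_constant[of "{-a<..<a}" "\<lambda>x. hfun \<alpha> (angle w0 x) - x"] by auto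
  then have "hfun \<alpha> (angle w0 u) - u = hfun \<alpha> (angle w0 0) - 0" using u zero_in_interval by metis
  then show ?thesis by (simp add: angle_0)
qed

end

theorem sinh_gordon_explicit:
  "\<exists>\<alpha> u0. \<alpha> > 0 \<and> (\<forall>u\<in>{-a<..<a}.
     z u = ln ((\<alpha>\<^sup>2 * (cos (inv (hfun \<alpha>) (u + u0)))\<^sup>2 + (sin (inv (hfun \<alpha>) (u + u0)))\<^sup>2) / \<alpha>))"
proof -
  obtain w0 where w0: "\<alpha> * (P 0 * P 0) = \<alpha>\<^sup>2 * (cos w0)\<^sup>2 + (sin w0)\<^sup>2"
    "\<alpha> * dP 0 = (1 - \<alpha>\<^sup>2) * (sin w0 * cos w0)"
    by (rule initial_angle_exists)
  have "z u = ln ((\<alpha>\<^sup>2 * (cos (inv (hfun \<alpha>) (u + hfun \<alpha> w0)))\<^sup>2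
      + (sin (inv (hfun \<alpha>) (u + hfun \<alpha> w0)))\<^sup>2) / \<alpha>)" if u: "u \<in> {-a<..<a}" for u
  proof -
    have "inv (hfun \<alpha>) (u + hfun \<alpha> w0) = angle w0 u"
      unfolding hfun_angle[OF w0 u, symmetric]
      using strict_mono_on_imp_inj_on[OF strict_mono_hfun[OF alpha(2)]] by (simp add: inv_f_f)
    moreover have "exp (z u) = (\<alpha>\<^sup>2 * (cos (angle w0 u))\<^sup>2 + (sin (angle w0 u))\<^sup>2) / \<alpha>"
      using angle_equation[OF w0 u] alpha(2) P_sq[of u] by (simp add: field_simps)
    ultimately show ?thesis by (metis ln_exp)
  qed
  then show ?thesis using alpha(2) by blast
qed

end

theorem theorem2p4:
  fixes l n :: "real \<Rightarrow> real \<Rightarrow> real^4" and E :: "real \<Rightarrow> real" and a b :: real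
    and z :: "real \<Rightarrow> real" and s t \<beta> :: real
  defines "z \<equiv> (\<lambda>u. ln (E u))"
      and "s \<equiv> z 0"
      and "t \<equiv> deriv z 0 / 2"
      and "\<beta> \<equiv> sqrt (t\<^sup>2 + 2 * cosh s)"
  assumes ab: "a > 0" "b > 0"
    and regular: "\<forall>u\<in>{-a<..<a}. E u > 0"
    and smooth: "smooth2 ({-a<..<a} \<times> {-b<..<b}) l"
    and first_ff: "\<forall>(u,v)\<in>{-a<..<a} \<times> {-b<..<b}.
          pu l u v \<bullet> pu l u v = E u \<and> pv l u v \<bullet> pv l u v = E u \<and>
          pu l u v \<bullet> pv l u v = 0 \<and> l u v \<bullet> l u v = 1"
    and normal: "\<forall>(u,v)\<in>{-a<..<a} \<times> {-b<..<b}.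
          n u v \<bullet> n u v = 1 \<and> n u v \<bullet> l u v = 0 \<and> n u v \<bullet> pu l u v = 0 \<and> n u v \<bullet> pv l u v = 0"
    and second_ff: "\<forall>(u,v)\<in>{-a<..<a} \<times> {-b<..<b}.
          pu (pu l) u v \<bullet> n u v = 1 \<and> pv (pu l) u v \<bullet> n u v = 0 \<and> pv (pv l) u v \<bullet> n u v = -1"
    and minimal: "\<forall>(u,v)\<in>{-a<..<a} \<times> {-b<..<b}. mean_curvature l n u v = 0"
    and circles: "\<forall>u\<in>{-a<..<a}. is_circle (\<lambda>v. l u v) {-b<..<b}"
    and nonconst: "\<not> (\<exists>c. \<forall>(u,v)\<in>{-a<..<a} \<times> {-b<..<b}. gauss_curvature l n u v = c)"
    and init: "l 0 0 = e1" "pu l 0 0 = sqrt (E 0) *\<^sub>R e2" "pv l 0 0 = sqrt (E 0) *\<^sub>R e3" "n 0 0 = e4"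
  shows "(\<forall>u\<in>{-a<..<a}. (z has_real_derivative deriv z u) (at u) \<and>
            (deriv z has_real_derivative deriv (deriv z) u) (at u) \<and>
            deriv (deriv z) u + 4 * sinh (z u) = 0)
       \<and> z 0 = s \<and> deriv z 0 = 2 * t
       \<and> (\<exists>\<alpha> u0. \<alpha> > 0 \<and> (\<forall>u\<in>{-a<..<a}.
            z u = ln ((\<alpha>\<^sup>2 * (cos (inv (hfun \<alpha>) (u + u0)))\<^sup>2 + (sin (inv (hfun \<alpha>) (u + u0)))\<^sup>2) / \<alpha>)))
       \<and> (\<exists>p p1 p2 :: real \<Rightarrow> real^4.
            (\<forall>u\<in>{-a<..<a}. (p has_vector_derivative p1 u) (at u) \<and>
                (p1 has_vector_derivative p2 u) (at u) \<and>
                p2 u + deriv z u *\<^sub>R p1 u + \<beta>\<^sup>2 *\<^sub>R p u = 0)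
          \<and> p 0 = (1 / \<beta>\<^sup>2) *\<^sub>R ((exp (- s / 2) * (t\<^sup>2 + exp (- s))) *\<^sub>R e1 - t *\<^sub>R e2 - exp (- s / 2) *\<^sub>R e4)
          \<and> p1 0 = (- t * exp (- s / 2)) *\<^sub>R e1 + e2
          \<and> (\<forall>(u,v)\<in>{-a<..<a} \<times> {-b<..<b}.
               l u v = exp (z u / 2) *\<^sub>R p u
                 + (exp (z u / 2) / \<beta>\<^sup>2) *\<^sub>R
                     (cos (\<beta> * v) *\<^sub>R (exp (s / 2) *\<^sub>R e1 + t *\<^sub>R e2 + exp (- s / 2) *\<^sub>R e4)
                      + (\<beta> * sin (\<beta> * v)) *\<^sub>R e3)))"
proof -
  obtain S where rectangle: "smooth_rectangle a b S" and smooth_l: "smooth_rectangle.smooth a b S l"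
    using smooth2_imp_smooth_rectangle[OF smooth ab] .
  interpret N: normalized_chart a b S l n E
    by (intro normalized_chart.intro principal_chart.intro rectangle principal_chart_axioms.intro
        normalized_chart_axioms.intro) (use smooth_l regular first_ff normal second_ff init in auto)
  have chart_defs: "z = N.z" "s = N.s" "t = N.t" "\<beta> = N.\<beta>"
    by (simp_all add: z_def s_def t_def \<beta>_def N.z_def N.s_def N.t_def N.\<beta>_def)
  interpret Z: sinh_gordon_solution a N.z "deriv N.z" "deriv (deriv N.z)"
    using ab(1) N.sinh_gordon by unfold_locales auto
  have "N.z 0 = N.s" "deriv N.z 0 = 2 * N.t" by (simp_all add: N.s_def N.t_def)
  then show ?thesis unfolding chart_defs
    using N.sinh_gordon Z.sinh_gordon_explicit N.exists_linear_ode_representation by blast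
qed

end
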